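(* Let $n\in\mathbb{N}$ and $m\in\mathbb{N}$. Then the linear map \[\begin{pmatrix}\iota_{m,1}&V_m\end{pmatrix}:E_{m+1}\oplus E_{m-1}\to E_m\otimes E_1,\qquad(\xi,\eta)\mapsto\iota_{m,1}\xi+V_m\eta,\] is an $SU(2)$-equivariant unitary isomorphism.
   Context: Fix $n\in\mathbb{N}$. Let $f_0,f_1$ be the standard basis of $\mathbb{C}^2$, $L_n\subseteq(\mathbb{C}^2)^{\otimes n}$ the symmetric tensors with projection $p_n$, $\rho_n$ the restriction to $L_n$ of the $n$-fold tensor power of the fundamental representation of $SU(2)$, $e_k=\sqrt{n!/(k!(n-k)!)}\,p_n(f_0^{\otimes k}\otimes f_1^{\otimes(n-k)})$ ($k=0,\dots,n$), and $\delta=(n+1)^{-1/2}\sum_{k=0}^n(-1)^ke_k\otimes e_{n-k}$, which spans the $\rho_n\otimes\rho_n$-invariant vectors in $L_n\otimes L_n$. For $m\ge2$, $E_m=\big(\sum_{i=1}^{m-1}L_n^{\otimes(i-1)}\otimes\mathbb{C}\delta\otimes L_n^{\otimes(m-i-1)}\big)^\perp\subseteq L_n^{\otimes m}$, $E_1=L_n$, $E_0=\mathbb{C}$, with $SU(2)$ acting by $\rho_n^{\otimes m}$; $\iota_{k,m}:E_{k+m}\to E_k\otimes E_m$ are the inclusions induced by $L_n^{\otimes(k+m)}=L_n^{\otimes k}\otimes L_n^{\otimes m}$ (with $E_0\otimes E_m=E_m=E_m\otimes E_0$). Let $d_0=1,d_1=n+1,d_m=d_1d_{m-1}-d_{m-2}$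 and $\mu_m=d_md_{m-1}/d_1$. Define $G_m:E_{m-1}\to L_n^{\otimes(m+1)}$ recursively by $G_1(1)=\delta$ and $G_m(\xi)=(G_{m-1}\otimes1)(\iota_{m-2,1}\xi)+(-1)^{(n+1)(m-1)}d_{m-1}\,\xi\otimes\delta$ for $m\ge2$; it is known that $G_m$ takes values in $E_m\otimes E_1$. Set $V_m=(-1)^{(n+1)(m-1)}\mu_m^{-1/2}G_m:E_{m-1}\to E_m\otimes E_1$. *)

theory Defs
  imports "HOL-Analysis.Analysis"
begin

text \<open>
The ambient space (C^2)^{\<otimes>N} is represented by coefficient
functions v :: nat list \<Rightarrow> complex, w.r.t. the basis f_{w_1} \<otimes> ... \<otimes> f_{w_N},
where the word w has length N and letters in {0,1}; v vanishes off such words.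
The tensor product of v (N = a) and u is concatenation of words.
L_n^{\<otimes>m} \<subseteq> (C^2)^{\<otimes>nm} (first tensor factor = first n letters, etc.).
SU(2) acts on (C^2)^{\<otimes>N} by g^{\<otimes>N}; \<rho>_n^{\<otimes>m} is its restriction.
\<close>

type_synonym tvec = "nat list \<Rightarrow> complex"

definition qwords :: "nat \<Rightarrow> nat list set" where
  "qwords N = {w. length w = N \<and> set w \<subseteq> {0,1}}"

definition qspace :: "nat \<Rightarrow> tvec set" where
  "qspace N = {v. \<forall>w. w \<notin> qwords N \<longrightarrow> v w = 0}"

definition qinner :: "nat \<Rightarrow> tvec \<Rightarrow> tvec \<Rightarrow> complex" where
  "qinner N v u = (\<Sum>w\<in>qwords N. cnj (v w) * u w)"

definition qtprod :: "nat \<Rightarrow> tvec \<Rightarrow> tvec \<Rightarrow> tvec" where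
  "qtprod a v u = (\<lambda>w. v (take a w) * u (drop a w))"

definition qspan :: "tvec set \<Rightarrow> tvec set" where
  "qspan S = {v. \<exists>F c. finite F \<and> F \<subseteq> S \<and> v = (\<lambda>w. \<Sum>u\<in>F. c u * u w)}"

definition qtens :: "nat \<Rightarrow> tvec set \<Rightarrow> tvec set \<Rightarrow> tvec set" where
  "qtens a A B = qspan {qtprod a x y | x y. x \<in> A \<and> y \<in> B}"

text \<open>Basis vector f_w, and the unit 1 \<in> C = (C^2)^{\<otimes>0}.\<close>
definition qbasis :: "nat list \<Rightarrow> tvec" where
  "qbasis u = (\<lambda>w. if w = u then 1 else 0)"

definition qunit :: tvec where
  "qunit = qbasis []"

definition SU2 :: "(nat \<Rightarrow> nat \<Rightarrow> complex) set" where
  "SU2 = {g. (\<forall>i\<in>{0,1}. \<forall>j\<in>{0,1}. (\<Sum>k\<in>{0,1}. cnj (g k i) * g k j) = (if i = j then 1 else 0))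
             \<and> g 0 0 * g 1 1 - g 0 1 * g 1 0 = 1}"

text \<open>g^{\<otimes>N} acting on (C^2)^{\<otimes>N}, where g f_j = \<Sum>_i g i j f_i.\<close>
definition qact :: "nat \<Rightarrow> (nat \<Rightarrow> nat \<Rightarrow> complex) \<Rightarrow> tvec \<Rightarrow> tvec" where
  "qact N g v = (\<lambda>w. if w \<in> qwords N
      then (\<Sum>u\<in>qwords N. (\<Prod>i<N. g (w ! i) (u ! i)) * v u) else 0)"

definition qperm_word :: "(nat \<Rightarrow> nat) \<Rightarrow> nat list \<Rightarrow> nat list" where
  "qperm_word \<sigma> w = map (\<lambda>i. w ! \<sigma> i) [0..<length w]"

definition qL :: "nat \<Rightarrow> tvec set" where
  "qL n = {v \<in> qspace n. \<forall>\<sigma>. \<sigma> permutes {..<n} \<longrightarrow> (\<forall>w. v (qperm_word \<sigma> w) = v w)}"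

definition qp :: "nat \<Rightarrow> tvec \<Rightarrow> tvec" where
  "qp n v = (\<lambda>w. if w \<in> qwords n
      then (\<Sum>\<sigma>\<in>{\<sigma>. \<sigma> permutes {..<n}}. v (qperm_word \<sigma> w)) / of_nat (fact n) else 0)"

definition qe :: "nat \<Rightarrow> nat \<Rightarrow> tvec" where
  "qe n k = (\<lambda>w. complex_of_real (sqrt (fact n / (fact k * fact (n - k))))
              * qp n (qbasis (replicate k 0 @ replicate (n - k) 1)) w)"

definition qdelta :: "nat \<Rightarrow> tvec" where
  "qdelta n = (\<lambda>w. complex_of_real (1 / sqrt (real (n + 1)))
               * (\<Sum>k\<le>n. (-1) ^ k * qtprod n (qe n k) (qe n (n - k)) w))"

fun qLpow :: "nat \<Rightarrow> nat \<Rightarrow> tvec set" where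
  "qLpow n 0 = qspan {qunit}"
| "qLpow n (Suc m) = qtens (n * m) (qLpow n m) (qL n)"

definition qDsum :: "nat \<Rightarrow> nat \<Rightarrow> tvec set" where
  "qDsum n m = qspan (\<Union>i\<in>{1..m-1}.
      qtens (n * (i + 1))
        (qtens (n * (i - 1)) (qLpow n (i - 1)) {(\<lambda>w. c * qdelta n w) | c. True})
        (qLpow n (m - i - 1)))"

definition qE :: "nat \<Rightarrow> nat \<Rightarrow> tvec set" where
  "qE n m = (if m = 0 then qspan {qunit} else if m = 1 then qL n
     else {v \<in> qLpow n m. \<forall>u\<in>qDsum n m. qinner (n * m) u v = 0})"

fun qd :: "nat \<Rightarrow> nat \<Rightarrow> int" where
  "qd n 0 = 1"
| "qd n (Suc 0) = int n + 1"
| "qd n (Suc (Suc k)) = (int n + 1) * qd n (Suc k) - qd n k"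

definition qmu :: "nat \<Rightarrow> nat \<Rightarrow> real" where
  "qmu n m = real_of_int (qd n m * qd n (m - 1)) / real_of_int (qd n 1)"

text \<open>A \<otimes> 1 for a linear map A : (C^2)^{\<otimes>a} \<rightarrow> (C^2)^{\<otimes>b}, acting on
  (C^2)^{\<otimes>a} \<otimes> (C^2)^{\<otimes>n} (slice-wise in the last n letters).\<close>
definition qmap_tens_id :: "nat \<Rightarrow> (tvec \<Rightarrow> tvec) \<Rightarrow> tvec \<Rightarrow> tvec" where
  "qmap_tens_id b A v = (\<lambda>w. A (\<lambda>x. v (x @ drop b w)) (take b w))"

text \<open>G_m : E_{m-1} \<rightarrow> L_n^{\<otimes>(m+1)} (given by its formula, which is linear).\<close>
fun qG :: "nat \<Rightarrow> nat \<Rightarrow> tvec \<Rightarrow> tvec" where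
  "qG n 0 = (\<lambda>\<xi>. (\<lambda>w. 0))"
| "qG n (Suc 0) = (\<lambda>\<xi>. qtprod 0 \<xi> (qdelta n))"
| "qG n (Suc (Suc k)) = (\<lambda>\<xi>. (\<lambda>w.
      qmap_tens_id (n * (Suc k + 1)) (qG n (Suc k)) \<xi> w
      + (-1) ^ ((n + 1) * Suc k) * of_int (qd n (Suc k)) * qtprod (n * Suc k) \<xi> (qdelta n) w))"

definition qV :: "nat \<Rightarrow> nat \<Rightarrow> tvec \<Rightarrow> tvec" where
  "qV n m \<eta> = (\<lambda>w. (-1) ^ ((n + 1) * (m - 1)) * complex_of_real (1 / sqrt (qmu n m)) * qG n m \<eta> w)"

definition qPhi :: "nat \<Rightarrow> nat \<Rightarrow> tvec \<times> tvec \<Rightarrow> tvec" where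
  "qPhi n m p = (\<lambda>w. fst p w + qV n m (snd p) w)"

end

theory Submission
  imports Defs
begin

text \<open>
  Identify \<open>(\<complex>\<^sup>2)^{\<otimes>N}\<close> with functions on binary words of length \<open>N\<close>. Then
  \<open>L_n^{\<otimes>k}\<close> consists of the functions depending on each block of \<open>n\<close> letters only
  through its number of zeros, and \<open>E_k\<close> consists of those that are annihilated by the
  contraction of any two adjacent blocks against \<open>\<delta>\<close>, because that contraction is adjoint
  to inserting \<open>\<delta>\<close>.

  Unfolding its recursion, \<open>G_m\<close> inserts \<open>\<delta>\<close> at every slot \<open>j < m\<close> with coefficient
  \<open>(-1)^{(n+1)j} d_j\<close>. On \<open>E_{m-1}\<close>, contracting at slot \<open>p\<close> a \<open>\<delta>\<close> inserted at slot
  \<open>j\<close> gives the identity for \<open>j = p\<close>, \<open>(-1)^n/(n+1)\<close> times the identity for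
  \<open>|j - p| = 1\<close> (zigzag identity) and zero otherwise. By the recursion for \<open>d_j\<close>, every
  contraction of \<open>G_m \<eta>\<close> vanishes except the last, which is \<open>\<plusminus>\<mu>_m/d_{m-1}\<close> times
  \<open>\<eta>\<close>. Hence \<open>V_m\<close> maps \<open>E_{m-1}\<close> isometrically into \<open>E_m \<otimes> E_1\<close>, orthogonally to
  \<open>E_{m+1}\<close>; and for \<open>y \<in> E_m \<otimes> E_1\<close> the vector \<open>y - V_m V_m\<^sup>* y\<close> is killed by the last
  contraction too, so it lies in \<open>E_{m+1}\<close>, which gives surjectivity.

  Equivariance reduces to the invariance of \<open>\<delta>\<close>: up to a nonzero factor, \<open>\<delta>\<close> is the
  symmetrisation in the first block of \<open>\<epsilon>^{\<otimes>n}\<close>, which is invariant since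
  \<open>det g = 1\<close>.
\<close>

lemma qperm_word_eq: "qperm_word = permute_list"
  by (auto simp: fun_eq_iff qperm_word_def permute_list_def)

lemma qwords_finite[simp]: "finite (qwords N)"
proof -
  have "qwords N = {xs. set xs \<subseteq> {0,1} \<and> length xs = N}" by (auto simp: qwords_def)
  then show ?thesis using finite_lists_length_eq[of "{0,1::nat}" N] by simp
qed

lemma qwords_length: "w \<in> qwords N \<Longrightarrow> length w = N"
  by (simp add: qwords_def)

lemma qwords_0: "qwords 0 = {[]}"
  by (auto simp: qwords_def)

lemma qwords_appendI: "x \<in> qwords a \<Longrightarrow> y \<in> qwords b \<Longrightarrow> x @ y \<in> qwords (a + b)"
  by (auto simp: qwords_def)

lemma qwords_append3I:
  "x \<in> qwords a \<Longrightarrow> y \<in> qwords b \<Longrightarrow> z \<in> qwords c \<Longrightarrow> x @ y @ z \<in> qwords (a + b + c)"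
  by (auto simp: qwords_def)

lemma qwords_add_split:
  assumes "w \<in> qwords (a + b)"
  obtains x y where "x \<in> qwords a" "y \<in> qwords b" "w = x @ y"
proof
  show "take a w \<in> qwords a" "drop a w \<in> qwords b"
    using assms by (auto simp: qwords_def dest: in_set_takeD in_set_dropD)
qed simp

lemma qwords_add3_split:
  assumes "w \<in> qwords (a + b + c)"
  obtains x y z where "x \<in> qwords a" "y \<in> qwords b" "z \<in> qwords c" "w = x @ y @ z"
proof -
  obtain x r where "x \<in> qwords a" "r \<in> qwords (b + c)" "w = x @ r"
    using assms by (metis add.assoc qwords_add_split)
  then show ?thesis by (metis qwords_add_split that)
qed

lemma qwords_add4_split:
  assumes "w \<in> qwords (a + b + c + d)"
  obtains x y z u where "x \<in> qwords a" "y \<in> qwords b" "z \<in> qwords c" "u \<in> qwords d"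
    "w = x @ y @ z @ u"
proof -
  obtain x r where "x \<in> qwords a" "r \<in> qwords (b + c + d)" "w = x @ r"
    using assms by (metis add.assoc qwords_add_split)
  then show ?thesis by (metis qwords_add3_split that)
qed

lemma bij_betw_append_qwords:
  "bij_betw (\<lambda>(x, y). x @ y) (qwords a \<times> qwords b) (qwords (a + b))"
proof (rule bij_betw_imageI)
  show "inj_on (\<lambda>(x, y). x @ y) (qwords a \<times> qwords b)"
    by (auto simp: inj_on_def qwords_length)
  show "(\<lambda>(x, y). x @ y) ` (qwords a \<times> qwords b) = qwords (a + b)"
    by (auto simp: qwords_appendI elim!: qwords_add_split)
qed

lemma sum_qwords_add:
  "(\<Sum>w\<in>qwords (a + b). f w) = (\<Sum>x\<in>qwords a. \<Sum>y\<in>qwords b. f (x @ y))"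
  by (simp add: sum.reindex_bij_betw[OF bij_betw_append_qwords, symmetric] sum.cartesian_product
      split_def)

lemma sum_qwords_add3:
  "(\<Sum>w\<in>qwords (a + b + c). f w) = (\<Sum>x\<in>qwords a. \<Sum>y\<in>qwords b. \<Sum>z\<in>qwords c. f (x @ y @ z))"
  by (simp add: sum_qwords_add flip: add.assoc)

lemma sum_qwords_Suc:
  "(\<Sum>w\<in>qwords (Suc n). f w) = (\<Sum>s\<in>{0,1}. \<Sum>u\<in>qwords n. f (s # u))"
proof -
  have "qwords 1 = {[0], [1]}" by (auto simp: qwords_def length_Suc_conv)
  then show ?thesis using sum_qwords_add[where a=1 and b=n and f=f] by simp
qed

lemma qspaceD: "v \<in> qspace N \<Longrightarrow> w \<notin> qwords N \<Longrightarrow> v w = 0"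
  by (simp add: qspace_def)

lemma qspaceI: "(\<And>w. w \<notin> qwords N \<Longrightarrow> v w = 0) \<Longrightarrow> v \<in> qspace N"
  by (simp add: qspace_def)

lemma qspace_eqI:
  "u \<in> qspace N \<Longrightarrow> v \<in> qspace N \<Longrightarrow> (\<And>w. w \<in> qwords N \<Longrightarrow> u w = v w) \<Longrightarrow> u = v"
  by (rule ext, case_tac "x \<in> qwords N") (auto simp: qspace_def)

lemma zero_qspace[simp]: "(\<lambda>w. 0) \<in> qspace N"
  by (simp add: qspace_def)

lemma qinner_cnj: "cnj (qinner N u v) = qinner N v u"
  by (simp add: qinner_def mult.commute)

lemma qinner_cong:
  "(\<And>w. w \<in> qwords N \<Longrightarrow> u w = u' w) \<Longrightarrow> (\<And>w. w \<in> qwords N \<Longrightarrow> v w = v' w)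
      \<Longrightarrow> qinner N u v = qinner N u' v'"
  unfolding qinner_def by (rule sum.cong) simp_all

lemma qinner_self: "qinner N v v = complex_of_real (\<Sum>w\<in>qwords N. (cmod (v w))\<^sup>2)"
  unfolding qinner_def of_real_sum
  by (rule sum.cong) (simp_all, metis complex_norm_square mult.commute of_real_power)

lemma qinner_self_eq_0:
  assumes "v \<in> qspace N" "qinner N v v = 0" shows "v = (\<lambda>w. 0)"
proof -
  have "(\<Sum>w\<in>qwords N. (cmod (v w))\<^sup>2) = 0"
    using assms(2) unfolding qinner_self by (simp only: of_real_eq_0_iff)
  then have "\<forall>w\<in>qwords N. v w = 0" by (simp add: sum_nonneg_eq_0_iff)
  with assms(1) show ?thesis by (auto simp: fun_eq_iff qspace_def)
qed

lemma qinner_add_right: "qinner N u (\<lambda>w. v w + v' w) = qinner N u v + qinner N u v'"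
  by (simp add: qinner_def distrib_left sum.distrib)

lemma qinner_add_left: "qinner N (\<lambda>w. u w + u' w) v = qinner N u v + qinner N u' v"
  by (simp add: qinner_def distrib_right sum.distrib)

lemma qinner_diff_right: "qinner N u (\<lambda>w. v w - v' w) = qinner N u v - qinner N u v'"
  by (simp add: qinner_def right_diff_distrib sum_subtractf)

lemma qinner_scale_right: "qinner N u (\<lambda>w. c * v w) = c * qinner N u v"
  by (simp add: qinner_def sum_distrib_left ac_simps)

lemma qinner_scale_left: "qinner N (\<lambda>w. c * u w) v = cnj c * qinner N u v"
  by (simp add: qinner_def sum_distrib_left ac_simps)

lemma qinner_sum_right: "qinner N u (\<lambda>w. \<Sum>j\<in>J. f j w) = (\<Sum>j\<in>J. qinner N u (f j))"
  unfolding qinner_def sum_distrib_left by (rule sum.swap)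

lemma qinner_sum_left: "qinner N (\<lambda>w. \<Sum>j\<in>J. f j w) v = (\<Sum>j\<in>J. qinner N (f j) v)"
  unfolding qinner_def cnj_sum sum_distrib_right by (rule sum.swap)

lemma qinner_zero_left[simp]: "qinner N (\<lambda>w. 0) v = 0"
  by (simp add: qinner_def)

lemma qinner_zero_right[simp]: "qinner N v (\<lambda>w. 0) = 0"
  by (simp add: qinner_def)

definition lin_closed :: "tvec set \<Rightarrow> bool" where
  "lin_closed A \<longleftrightarrow> (\<forall>F c. finite F \<longrightarrow> F \<subseteq> A \<longrightarrow> (\<lambda>w. \<Sum>u\<in>F. c u * u w) \<in> A)"

lemma qspan_least:
  assumes "S \<subseteq> A" "lin_closed A" shows "qspan S \<subseteq> A"
proof
  fix v assume "v \<in> qspan S"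
  then obtain F c where "finite F" "F \<subseteq> S" "v = (\<lambda>w. \<Sum>u\<in>F. c u * u w)"
    by (auto simp: qspan_def)
  then show "v \<in> A" using assms unfolding lin_closed_def by blast
qed

lemma qspan_base: "x \<in> S \<Longrightarrow> x \<in> qspan S"
  unfolding qspan_def by (rule CollectI, rule exI[of _ "{x}"], rule exI[of _ "\<lambda>_. 1"]) auto

lemma lin_closed_sum:
  assumes "lin_closed A" "finite J" "\<And>j. j \<in> J \<Longrightarrow> f j \<in> A"
  shows "(\<lambda>w. \<Sum>j\<in>J. c j * f j w) \<in> A"
proof -
  define c' where "c' u = (\<Sum>j\<in>{j\<in>J. f j = u}. c j)" for u
  have "(\<lambda>w. \<Sum>u\<in>f ` J. c' u * u w) \<in> A"
    using assms unfolding lin_closed_def by auto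
  moreover have "(\<Sum>u\<in>f ` J. c' u * u w) = (\<Sum>j\<in>J. c j * f j w)" for w
    using sum.image_gen[OF assms(2), of "\<lambda>j. c j * f j w" f]
    by (simp add: c'_def sum_distrib_right)
  ultimately show ?thesis by simp
qed

lemma lin_closed_sum1:
  assumes "lin_closed A" "finite J" "\<And>j. j \<in> J \<Longrightarrow> f j \<in> A"
  shows "(\<lambda>w. \<Sum>j\<in>J. f j w) \<in> A"
  using lin_closed_sum[OF assms, where c="\<lambda>_. 1"] by simp

lemma lin_closed_add:
  assumes "lin_closed A" "u \<in> A" "v \<in> A" shows "(\<lambda>w. u w + v w) \<in> A"
  using lin_closed_sum[OF assms(1), of "{0::nat,1}" "\<lambda>j. if j = 0 then u else v" "\<lambda>_. 1"] assms
  by simp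

lemma lin_closed_scale:
  assumes "lin_closed A" "u \<in> A" shows "(\<lambda>w. c * u w) \<in> A"
  using lin_closed_sum[OF assms(1), of "{0::nat}" "\<lambda>j. u" "\<lambda>_. c"] assms by simp

lemma lin_closed_diff:
  assumes "lin_closed A" "u \<in> A" "v \<in> A" shows "(\<lambda>w. u w - v w) \<in> A"
  using lin_closed_add[OF assms(1,2) lin_closed_scale[OF assms(1,3), of "-1"]] by simp

lemma lin_closed_Int:
  assumes "lin_closed A" "lin_closed B" shows "lin_closed (A \<inter> B)"
  unfolding lin_closed_def
proof (intro allI impI)
  fix F :: "tvec set" and c assume "finite F" "F \<subseteq> A \<inter> B"
  with assms show "(\<lambda>w. \<Sum>u\<in>F. c u * u w) \<in> A \<inter> B"
    unfolding lin_closed_def by (simp add: Int_subset_iff)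
qed

lemma lin_closed_qspace: "lin_closed (qspace N)"
  unfolding lin_closed_def qspace_def by (auto intro!: sum.neutral)

lemma qspan_lincomb:
  assumes "finite F" "F \<subseteq> qspan S"
  shows "(\<lambda>w. \<Sum>u\<in>F. c u * u w) \<in> qspan S"
proof -
  have "\<forall>u\<in>F. \<exists>G. \<exists>d. finite G \<and> G \<subseteq> S \<and> u = (\<lambda>w. \<Sum>x\<in>G. d x * x w)"
    using assms(2) by (auto simp: qspan_def)
  from bchoice[OF this] obtain G
    where "\<forall>u\<in>F. \<exists>d. finite (G u) \<and> G u \<subseteq> S \<and> u = (\<lambda>w. \<Sum>x\<in>G u. d x * x w)" ..
  from bchoice[OF this] obtain d
    where G: "\<And>u. u \<in> F \<Longrightarrow> finite (G u) \<and> G u \<subseteq> S \<and> u = (\<lambda>w. \<Sum>x\<in>G u. d u x * x w)"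
    by blast
  define U where "U = (\<Union>u\<in>F. G u)"
  define e where "e x = (\<Sum>u\<in>F. c u * (if x \<in> G u then d u x else 0))" for x
  have U: "finite U" "U \<subseteq> S" using G assms(1) by (auto simp: U_def)
  have expand: "u w = (\<Sum>x\<in>U. (if x \<in> G u then d u x else 0) * x w)" if u: "u \<in> F" for u w
  proof -
    have "u w = (\<Sum>x\<in>G u. d u x * x w)" using G[OF u] by (simp add: fun_eq_iff)
    also have "\<dots> = (\<Sum>x\<in>U. (if x \<in> G u then d u x else 0) * x w)"
      using G[OF u] u by (intro sum.mono_neutral_cong_left[OF U(1)]) (auto simp: U_def)
    finally show ?thesis .
  qed
  have "(\<Sum>u\<in>F. c u * u w) = (\<Sum>x\<in>U. e x * x w)" for w
  proof -
    have "(\<Sum>u\<in>F. c u * u w) = (\<Sum>u\<in>F. \<Sum>x\<in>U. c u * (if x \<in> G u then d u x else 0) * x w)"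
      by (rule sum.cong[OF refl]) (simp only: expand sum_distrib_left mult.assoc)
    also have "\<dots> = (\<Sum>x\<in>U. e x * x w)"
      unfolding e_def sum_distrib_right by (rule sum.swap)
    finally show ?thesis .
  qed
  then have "(\<lambda>w. \<Sum>u\<in>F. c u * u w) = (\<lambda>w. \<Sum>x\<in>U. e x * x w)" by simp
  with U show ?thesis unfolding qspan_def by blast
qed

lemma lin_closed_qspan: "lin_closed (qspan S)"
  unfolding lin_closed_def using qspan_lincomb by blast

lemma qspan_orth:
  assumes "\<And>u. u \<in> S \<Longrightarrow> qinner N u v = 0" "u \<in> qspan S"
  shows "qinner N u v = 0"
proof -
  obtain F c where F: "finite F" "F \<subseteq> S" "u = (\<lambda>w. \<Sum>x\<in>F. c x * x w)"
    using assms(2) by (auto simp: qspan_def)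
  show ?thesis unfolding F(3) qinner_sum_left qinner_scale_left
    using assms(1) F(2) by (auto intro!: sum.neutral)
qed

definition zeros :: "nat list \<Rightarrow> nat" where "zeros w = count (mset w) 0"

lemma zeros_Nil[simp]: "zeros [] = 0"
  by (simp add: zeros_def)

lemma zeros_Cons: "zeros (a # w) = (if a = 0 then Suc (zeros w) else zeros w)"
  by (simp add: zeros_def)

lemma zeros_le_length: "zeros w \<le> length w"
  by (induction w) (auto simp: zeros_Cons)

lemma zeros_qwords_le: "w \<in> qwords n \<Longrightarrow> zeros w \<le> n"
  using zeros_le_length qwords_length by metis

lemma mset_qword:
  "set w \<subseteq> {0,1} \<Longrightarrow> mset w = replicate_mset (zeros w) 0 + replicate_mset (length w - zeros w) 1"
proof (induction w)
  case (Cons a w)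
  then show ?case using zeros_le_length[of w] by (auto simp: zeros_Cons Suc_diff_le)
qed simp

lemma mset_eq_if_zeros_eq:
  "w \<in> qwords n \<Longrightarrow> w' \<in> qwords n \<Longrightarrow> zeros w = zeros w' \<Longrightarrow> mset w = mset w'"
  by (simp add: qwords_def mset_qword)

lemma qperm_qwords: "\<sigma> permutes {..<n} \<Longrightarrow> w \<in> qwords n \<Longrightarrow> qperm_word \<sigma> w \<in> qwords n"
  by (auto simp: qperm_word_eq qwords_def set_permute_list)

lemma zeros_qperm: "\<sigma> permutes {..<n} \<Longrightarrow> w \<in> qwords n \<Longrightarrow> zeros (qperm_word \<sigma> w) = zeros w"
  by (simp add: qperm_word_eq zeros_def mset_permute_list qwords_length)

lemma qperm_compose:
  "\<sigma> permutes {..<n} \<Longrightarrow> \<tau> permutes {..<n} \<Longrightarrow> w \<in> qwords n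
      \<Longrightarrow> qperm_word \<sigma> (qperm_word \<tau> w) = qperm_word (\<tau> \<circ> \<sigma>) w"
  by (simp add: qperm_word_eq permute_list_compose qwords_length)

lemma bij_betw_qperm:
  assumes \<sigma>: "\<sigma> permutes {..<n}"
  shows "bij_betw (qperm_word \<sigma>) (qwords n) (qwords n)"
proof (rule bij_betw_byWitness[where f'="qperm_word (inv \<sigma>)"])
  have \<sigma>': "inv \<sigma> permutes {..<n}" using \<sigma> by (rule permutes_inv)
  show "\<forall>w\<in>qwords n. qperm_word (inv \<sigma>) (qperm_word \<sigma> w) = w"
    by (simp add: qperm_compose[OF \<sigma>' \<sigma>] permutes_inv_o[OF \<sigma>]) (simp add: qperm_word_eq)
  show "\<forall>w\<in>qwords n. qperm_word \<sigma> (qperm_word (inv \<sigma>) w) = w"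
    by (simp add: qperm_compose[OF \<sigma> \<sigma>'] permutes_inv_o[OF \<sigma>]) (simp add: qperm_word_eq)
  show "qperm_word \<sigma> ` qwords n \<subseteq> qwords n" "qperm_word (inv \<sigma>) ` qwords n \<subseteq> qwords n"
    using qperm_qwords[OF \<sigma>] qperm_qwords[OF \<sigma>'] by auto
qed

lemma sum_qperm:
  "\<sigma> permutes {..<n} \<Longrightarrow> (\<Sum>w\<in>qwords n. f (qperm_word \<sigma> w)) = (\<Sum>w\<in>qwords n. f w)"
  by (rule sum.reindex_bij_betw[OF bij_betw_qperm])

lemma qperm_if_zeros_eq:
  assumes "w \<in> qwords n" "w' \<in> qwords n" "zeros w = zeros w'"
  obtains \<sigma> where "\<sigma> permutes {..<n}" "qperm_word \<sigma> w = w'"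
proof -
  have "mset w' = mset w" using mset_eq_if_zeros_eq[OF assms] by simp
  then obtain p where "p permutes {..<length w}" "permute_list p w = w'"
    by (rule mset_eq_permutation)
  moreover have "length w = n" using assms(1) by (rule qwords_length)
  ultimately show ?thesis by (intro that) (simp_all add: qperm_word_eq)
qed

definition zero_count_sym :: "nat \<Rightarrow> tvec set" where
  "zero_count_sym n = {v \<in> qspace n. \<forall>w\<in>qwords n. \<forall>w'\<in>qwords n. zeros w = zeros w' \<longrightarrow> v w = v w'}"

lemma zero_count_sym_qspace: "v \<in> zero_count_sym n \<Longrightarrow> v \<in> qspace n"
  unfolding zero_count_sym_def by blast

lemma zero_count_symD:
  "v \<in> zero_count_sym n \<Longrightarrow> w \<in> qwords n \<Longrightarrow> w' \<in> qwords n \<Longrightarrow> zeros w = zeros w' \<Longrightarrow> v w = v w'"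
  unfolding zero_count_sym_def by blast

lemma qperm_word_qwords_iff:
  "\<sigma> permutes {..<n} \<Longrightarrow> qperm_word \<sigma> w \<in> qwords n \<longleftrightarrow> w \<in> qwords n"
  by (auto simp: qwords_def qperm_word_eq set_permute_list)

lemma qL_eq_zero_count_sym: "qL n = zero_count_sym n"
proof (intro equalityI subsetI)
  fix v assume v: "v \<in> qL n"
  have "v w = v w'" if w: "w \<in> qwords n" "w' \<in> qwords n" "zeros w = zeros w'" for w w'
  proof -
    obtain \<sigma> where "\<sigma> permutes {..<n}" "qperm_word \<sigma> w = w'"
      using qperm_if_zeros_eq[OF w] .
    with v show ?thesis by (metis (mono_tags, lifting) mem_Collect_eq qL_def)
  qed
  with v show "v \<in> zero_count_sym n" unfolding qL_def zero_count_sym_def by blast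
next
  fix v assume v: "v \<in> zero_count_sym n"
  have "v (qperm_word \<sigma> w) = v w" if \<sigma>: "\<sigma> permutes {..<n}" for \<sigma> w
  proof (cases "w \<in> qwords n")
    case True
    then show ?thesis by (intro zero_count_symD[OF v] qperm_qwords[OF \<sigma>] zeros_qperm[OF \<sigma>])
  next
    case False
    then show ?thesis
      using zero_count_sym_qspace[OF v] qperm_word_qwords_iff[OF \<sigma>] by (simp add: qspaceD)
  qed
  with v show "v \<in> qL n" unfolding qL_def using zero_count_sym_qspace by blast
qed

lemma card_zeros_class: "card {w \<in> qwords n. zeros w = k} = n choose k"
proof (induction n arbitrary: k)
  case 0
  then show ?case by (cases k) (auto simp: qwords_0 Collect_conv_if)
next
  case (Suc n)
  have split: "{w \<in> qwords (Suc n). zeros w = k}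
      = (\<lambda>u. 0 # u) ` {u \<in> qwords n. Suc (zeros u) = k} \<union> (\<lambda>u. 1 # u) ` {u \<in> qwords n. zeros u = k}"
    by (auto simp: qwords_def zeros_Cons length_Suc_conv)
  have "card {w \<in> qwords (Suc n). zeros w = k}
      = card {u \<in> qwords n. Suc (zeros u) = k} + card {u \<in> qwords n. zeros u = k}"
    unfolding split by (subst card_Un_disjoint) (auto simp: card_image)
  also have "\<dots> = Suc n choose k"
    using Suc.IH by (cases k) auto
  finally show ?case .
qed

lemma sum_qwords_by_zeros:
  "(\<Sum>x\<in>qwords n. h x) = (\<Sum>k\<le>n. \<Sum>x\<in>{x \<in> qwords n. zeros x = k}. h x)"
  by (rule sum.group[symmetric]) (auto simp: zeros_qwords_le)

lemma qp_qspace: "qp n f \<in> qspace n"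
  by (simp add: qp_def qspace_def)

lemma qp_qperm:
  assumes "\<tau> permutes {..<n}" "w \<in> qwords n"
  shows "qp n f (qperm_word \<tau> w) = qp n f w"
proof -
  have "(\<Sum>\<sigma>\<in>{\<sigma>. \<sigma> permutes {..<n}}. f (qperm_word \<sigma> (qperm_word \<tau> w)))
      = (\<Sum>\<sigma>\<in>{\<sigma>. \<sigma> permutes {..<n}}. f (qperm_word (\<tau> \<circ> \<sigma>) w))"
    by (intro sum.cong refl) (simp add: qperm_compose assms)
  also have "\<dots> = (\<Sum>\<sigma>\<in>{\<sigma>. \<sigma> permutes {..<n}}. f (qperm_word \<sigma> w))"
    using setum_permutations_compose_left[OF assms(1), of "\<lambda>\<sigma>. f (qperm_word \<sigma> w)"] by simp
  finally show ?thesis using assms qperm_qwords by (simp add: qp_def)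
qed

lemma qp_zero_count_sym: "qp n f \<in> zero_count_sym n"
proof -
  have "qp n f w = qp n f w'" if w: "w \<in> qwords n" "w' \<in> qwords n" "zeros w = zeros w'" for w w'
  proof -
    obtain \<sigma> where "\<sigma> permutes {..<n}" "qperm_word \<sigma> w = w'"
      using qperm_if_zeros_eq[OF w] .
    then show ?thesis using qp_qperm[of \<sigma> n w f] w(1) by simp
  qed
  then show ?thesis unfolding zero_count_sym_def using qp_qspace by blast
qed

lemma sum_qp: "(\<Sum>w\<in>qwords n. qp n f w) = (\<Sum>w\<in>qwords n. f w)"
proof -
  have "(\<Sum>w\<in>qwords n. qp n f w)
      = (\<Sum>\<sigma>\<in>{\<sigma>. \<sigma> permutes {..<n}}. \<Sum>w\<in>qwords n. f (qperm_word \<sigma> w)) / of_nat (fact n)"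
    by (simp add: qp_def sum_divide_distrib[symmetric]) (rule sum.swap)
  also have "\<dots> = (\<Sum>w\<in>qwords n. f w)"
    by (simp add: sum_qperm card_permutations[of "{..<n}" n])
  finally show ?thesis .
qed

lemma qp_qbasis:
  assumes u: "u \<in> qwords n" and w: "w \<in> qwords n"
  shows "qp n (qbasis u) w = (if zeros w = zeros u then 1 / of_nat (n choose zeros u) else 0)"
proof -
  define k where "k = zeros u"
  define c where "c = qp n (qbasis u) u"
  have zero: "qp n (qbasis u) x = 0" if x: "x \<in> qwords n" "zeros x \<noteq> k" for x
  proof -
    have "qbasis u (qperm_word \<sigma> x) = 0" if \<sigma>: "\<sigma> permutes {..<n}" for \<sigma>
      using zeros_qperm[OF \<sigma> x(1)] x(2) by (auto simp: qbasis_def k_def)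
    then show ?thesis by (simp add: qp_def)
  qed
  have const: "qp n (qbasis u) x = c" if x: "x \<in> qwords n" "zeros x = k" for x
    unfolding c_def using zero_count_symD[OF qp_zero_count_sym x(1) u] x(2) by (simp add: k_def)
  have k: "k \<le> n" using u by (simp add: k_def zeros_qwords_le)
  have "1 = (\<Sum>x\<in>qwords n. qbasis u x)"
    using u by (simp add: qbasis_def)
  also have "\<dots> = (\<Sum>j\<le>n. \<Sum>x\<in>{x \<in> qwords n. zeros x = j}. qp n (qbasis u) x)"
    by (simp only: sum_qwords_by_zeros[symmetric] sum_qp)
  also have "\<dots> = (\<Sum>j\<le>n. if j = k then of_nat (n choose k) * c else 0)"
  proof (rule sum.cong[OF refl])
    fix j
    show "(\<Sum>x\<in>{x \<in> qwords n. zeros x = j}. qp n (qbasis u) x)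
        = (if j = k then of_nat (n choose k) * c else 0)"
    proof (cases "j = k")
      case True
      then have "(\<Sum>x\<in>{x \<in> qwords n. zeros x = j}. qp n (qbasis u) x)
          = (\<Sum>x\<in>{x \<in> qwords n. zeros x = k}. c)"
        using const by (intro sum.cong) auto
      then show ?thesis using True by (simp add: card_zeros_class)
    next
      case False
      then show ?thesis using zero by (auto intro!: sum.neutral)
    qed
  qed
  also have "\<dots> = of_nat (n choose k) * c"
    using k by simp
  finally have "c = 1 / of_nat (n choose k)"
    using k by (simp add: field_simps)
  then show ?thesis
    using const[OF w] zero[OF w] by (auto simp: k_def)
qed

definition sym_basis :: "nat \<Rightarrow> nat \<Rightarrow> tvec" where
  "sym_basis n k w
      = (if w \<in> qwords n \<and> zeros w = k then complex_of_real (1 / sqrt (real (n choose k))) else 0)"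

lemma qe_eq_sym_basis:
  assumes "k \<le> n" shows "qe n k = sym_basis n k"
proof
  fix w
  let ?u = "replicate k 0 @ replicate (n - k) (1::nat)"
  let ?c = "real (n choose k)"
  have u: "?u \<in> qwords n" "zeros ?u = k" using assms by (auto simp: qwords_def zeros_def)
  have c: "fact n / (fact k * fact (n - k)) = ?c"
    using binomial_fact[OF assms, where 'a=real] by simp
  have "sqrt ?c / ?c = 1 / sqrt ?c"
    using assms by (simp add: field_simps)
  then have sqrt_c: "complex_of_real (sqrt ?c) / of_nat (n choose k)
      = complex_of_real (1 / sqrt ?c)"
    by (metis of_real_divide of_real_of_nat_eq)
  show "qe n k w = sym_basis n k w"
  proof (cases "w \<in> qwords n")
    case True
    then show ?thesis using u sqrt_c by (simp add: qe_def c qp_qbasis sym_basis_def)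
  next
    case False
    then show ?thesis by (simp add: qe_def qp_def sym_basis_def)
  qed
qed

lemma cnj_sym_basis: "cnj (sym_basis n k w) = sym_basis n k w"
  by (simp add: sym_basis_def)

lemma sym_basis_qspace: "sym_basis n k \<in> qspace n"
  by (simp add: sym_basis_def qspace_def)

lemma sym_basis_qL: "sym_basis n k \<in> qL n"
  by (auto simp: qL_eq_zero_count_sym zero_count_sym_def sym_basis_qspace sym_basis_def)

lemma of_real_inverse_sqrt_square:
  "c \<ge> 0 \<Longrightarrow> complex_of_real (1 / sqrt c) * complex_of_real (1 / sqrt c) = complex_of_real (1 / c)"
  by (simp flip: of_real_mult)

lemma of_real_sqrt_square: "complex_of_real (sqrt (real c)) * complex_of_real (sqrt (real c))
    = of_nat c"
  by (simp flip: of_real_mult)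

definition sym_kernel :: "nat \<Rightarrow> nat list \<Rightarrow> nat list \<Rightarrow> complex" where
  "sym_kernel n z a = (if zeros z = zeros a then 1 / of_nat (n choose zeros a) else 0)"

lemma sum_sym_basis_products:
  assumes "z \<in> qwords n" "a \<in> qwords n"
  shows "(\<Sum>k\<le>n. sym_basis n k z * sym_basis n k a) = sym_kernel n z a"
proof -
  have "(\<Sum>k\<le>n. sym_basis n k z * sym_basis n k a)
      = (\<Sum>k\<le>n. if k
          = zeros a then (if zeros z
              = zeros a then complex_of_real (1 / real (n choose zeros a)) else 0) else 0)"
    using assms by (intro sum.cong refl)
      (auto simp: sym_basis_def of_real_inverse_sqrt_square of_real_sqrt_square)
  then show ?thesis using assms(2) by (simp add: zeros_qwords_le sym_kernel_def)
qed

lemma sym_kernel_commute: "sym_kernel n a b = sym_kernel n b a"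
  by (simp add: sym_kernel_def)

text \<open>\<open>sym_kernel n\<close> is the kernel of the orthogonal projection \<open>qp n\<close> onto \<open>L_n\<close>.\<close>

lemma sym_kernel_reproduces:
  assumes "a \<in> qwords n" "\<And>z. z \<in> qwords n \<Longrightarrow> zeros z = zeros a \<Longrightarrow> f z = f a"
  shows "(\<Sum>z\<in>qwords n. sym_kernel n z a * f z) = f a"
proof -
  have "(\<Sum>z\<in>qwords n. sym_kernel n z a * f z)
      = (\<Sum>z\<in>qwords n. if zeros z = zeros a then f a / of_nat (n choose zeros a) else 0)"
    by (rule sum.cong[OF refl]) (simp add: sym_kernel_def assms(2))
  also have "\<dots> = (\<Sum>z\<in>{z\<in>qwords n. zeros z = zeros a}. f a / of_nat (n choose zeros a))"
    by (rule sum.inter_filter[symmetric]) simp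
  also have "\<dots> = f a" using zeros_qwords_le[OF assms(1)] by (simp add: card_zeros_class)
  finally show ?thesis .
qed

section \<open>The invariant vector \<open>\<delta>\<close>\<close>

definition delta_coeff :: "nat \<Rightarrow> nat \<Rightarrow> real" where
  "delta_coeff n k = (-1)^k / (sqrt (real (n + 1)) * real (n choose k))"

lemma qtprod_append: "length x = a \<Longrightarrow> qtprod a f g (x @ y) = f x * g y"
  by (simp add: qtprod_def)

lemma qdelta_append_qwords:
  assumes x: "x \<in> qwords n"
  shows "qdelta n (x @ y)
      = complex_of_real (1 / sqrt (real (n + 1)))
          * ((-1) ^ zeros x * (sym_basis n (zeros x) x * sym_basis n (n - zeros x) y))"
proof -
  have "(\<Sum>k\<le>n. (-1) ^ k * (sym_basis n k x * sym_basis n (n - k) y))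
      = (\<Sum>k\<le>n. if k = zeros x then (-1) ^ k * (sym_basis n k x * sym_basis n (n - k) y) else 0)"
    by (intro sum.cong refl) (simp add: sym_basis_def)
  then show ?thesis
    using x zeros_qwords_le[OF x]
    by (simp add: qdelta_def qtprod_append qe_eq_sym_basis qwords_length)
qed

lemma qdelta_append:
  assumes "length x = n"
  shows "qdelta n (x @ y)
      = (if x \<in> qwords n \<and> y \<in> qwords n \<and> zeros x + zeros y
          = n then complex_of_real (delta_coeff n (zeros x)) else 0)"
proof (cases "x \<in> qwords n")
  case True
  have k: "zeros x \<le> n" using True by (rule zeros_qwords_le)
  then have "n choose (n - zeros x) = n choose zeros x" by (rule binomial_symmetric[symmetric])
  then show ?thesis
    using True k unfolding qdelta_append_qwords[OF True]
    by (auto simp: sym_basis_def delta_coeff_def of_real_inverse_sqrt_square of_real_sqrt_square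
        simp flip: of_real_mult)
next
  case False
  then show ?thesis using assms by (simp add: qdelta_def qtprod_def qe_eq_sym_basis sym_basis_def)
qed

lemma qdelta_qspace: "qdelta n \<in> qspace (2 * n)"
proof (rule qspaceI)
  fix w assume w: "w \<notin> qwords (2 * n)"
  show "qdelta n w = 0"
  proof (cases "length w \<ge> n")
    case True
    then have "\<not> (take n w \<in> qwords n \<and> drop n w \<in> qwords n)"
      using w qwords_appendI[of "take n w" n "drop n w" n] by (auto simp: mult_2)
    then show ?thesis using qdelta_append[of "take n w" n "drop n w"] True by auto
  next
    case False
    then show ?thesis by (simp add: qdelta_def qtprod_def qe_eq_sym_basis sym_basis_def qwords_def)
  qed
qed

lemma cnj_qdelta[simp]: "cnj (qdelta n w) = qdelta n w"
proof (cases "length w \<ge> n")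
  case True
  then show ?thesis using qdelta_append[of "take n w" n "drop n w"] by simp
next
  case False
  then have "w \<notin> qwords (2 * n)" by (auto simp: qwords_def)
  then show ?thesis using qspaceD[OF qdelta_qspace] by simp
qed

lemma delta_coeff_square:
  assumes "k \<le> n"
  shows "real (n choose k) * (delta_coeff n k)\<^sup>2 = 1 / (real (n + 1) * real (n choose k))"
proof -
  have "((-1::real)^k)\<^sup>2 = 1" by (simp flip: power_mult)
  then show ?thesis using assms
    by (simp add: delta_coeff_def power_divide power_mult_distrib power2_eq_square)
qed

lemma sum_qdelta_square: "(\<Sum>z\<in>qwords (2 * n). qdelta n z * qdelta n z) = 1"
proof -
  have inner: "(\<Sum>y\<in>qwords n. qdelta n (x @ y) * qdelta n (x @ y))
      = complex_of_real (1 / (real (n + 1) * real (n choose zeros x)))" if x: "x \<in> qwords n" for x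
  proof -
    let ?d = "complex_of_real ((delta_coeff n (zeros x))\<^sup>2)"
    have k: "zeros x \<le> n" using x by (rule zeros_qwords_le)
    have "(\<Sum>y\<in>qwords n. qdelta n (x @ y) * qdelta n (x @ y))
        = (\<Sum>y\<in>qwords n. if zeros y = n - zeros x then ?d else 0)"
      using x k by (intro sum.cong refl) (auto simp: qdelta_append qwords_length power2_eq_square)
    also have "\<dots> = (\<Sum>y\<in>{y\<in>qwords n. zeros y = n - zeros x}. ?d)"
      by (rule sum.inter_filter[symmetric]) simp
    also have "\<dots> = complex_of_real (real (n choose zeros x) * (delta_coeff n (zeros x))\<^sup>2)"
      using k by (simp add: card_zeros_class binomial_symmetric[symmetric])
    finally show ?thesis by (simp only: delta_coeff_square[OF k])
  qed
  have "(\<Sum>z\<in>qwords (2 * n). qdelta n z * qdelta n z)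
      = (\<Sum>k\<le>n. \<Sum>x\<in>{x \<in> qwords n. zeros x = k}.
          complex_of_real (1 / (real (n + 1) * real (n choose zeros x))))"
    by (simp only: mult_2 sum_qwords_add sum_qwords_by_zeros[symmetric]) (intro sum.cong refl inner)
  also have "\<dots> = (\<Sum>k\<le>n. complex_of_real (1 / real (n + 1)))"
  proof (rule sum.cong[OF refl])
    fix k assume "k \<in> {..n}"
    then have "real (n choose k) > 0" by simp
    then show "(\<Sum>x\<in>{x \<in> qwords n. zeros x = k}.
        complex_of_real (1 / (real (n + 1) * real (n choose zeros x))))
            = complex_of_real (1 / real (n + 1))"
      by (simp add: card_zeros_class of_real_mult of_real_divide)
  qed
  also have "\<dots> = 1"
    using of_nat_neq_0[of n, where 'a=complex] by (simp add: of_real_divide)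
  finally show ?thesis .
qed

lemma qdelta_zigzag:
  assumes a: "a \<in> qwords n" and b: "b \<in> qwords n"
  shows "(\<Sum>z\<in>qwords n. qdelta n (a @ z) * qdelta n (z @ b))
      = complex_of_real ((-1)^n / real (n + 1)) * sym_kernel n a b"
proof -
  let ?k = "zeros a"
  let ?c = "complex_of_real ((-1)^n / (real (n + 1) * (real (n choose ?k))\<^sup>2))"
  have k: "?k \<le> n" using a by (rule zeros_qwords_le)
  have summand: "qdelta n (a @ z) * qdelta n (z @ b)
      = (if zeros z = n - ?k \<and> zeros b = ?k then ?c else 0)" if z: "z \<in> qwords n" for z
  proof (cases "zeros z = n - ?k \<and> zeros b = ?k")
    case True
    have "(-1::real) ^ ?k * (-1) ^ zeros z = (-1) ^ n" using True k by (simp flip: power_add)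
    moreover have "n choose zeros z = n choose ?k"
      using True k by (simp add: binomial_symmetric[symmetric])
    ultimately have "delta_coeff n ?k * delta_coeff n (zeros z)
        = (-1)^n / (real (n + 1) * (real (n choose ?k))\<^sup>2)"
      by (simp add: delta_coeff_def power2_eq_square)
    then show ?thesis using True a b z k
      by (simp add: qdelta_append qwords_length flip: of_real_mult)
  qed (use a b z k in \<open>auto simp: qdelta_append qwords_length\<close>)
  have "(\<Sum>z\<in>qwords n. qdelta n (a @ z) * qdelta n (z @ b))
      = (\<Sum>z\<in>qwords n. if zeros z = n - ?k then (if zeros b = ?k then ?c else 0) else 0)"
    using summand by (intro sum.cong refl) auto
  also have "\<dots> = (\<Sum>z\<in>{z\<in>qwords n. zeros z = n - ?k}. if zeros b = ?k then ?c else 0)"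
    by (rule sum.inter_filter[symmetric]) simp
  also have "\<dots> = of_nat (n choose ?k) * (if zeros b = ?k then ?c else 0)"
    using k by (simp add: card_zeros_class binomial_symmetric[symmetric])
  also have "\<dots> = complex_of_real ((-1)^n / real (n + 1)) * sym_kernel n a b"
  proof -
    have "real (n choose ?k) * ((-1)^n / (real (n + 1) * (real (n choose ?k))\<^sup>2))
        = (-1)^n / real (n + 1) * (1 / real (n choose ?k))"
      using k by (simp add: power2_eq_square)
    then have "complex_of_real (real (n choose ?k)) * ?c
        = complex_of_real ((-1)^n / real (n + 1)) * complex_of_real (1 / real (n choose ?k))"
      by (simp only: of_real_mult[symmetric])
    then show ?thesis by (simp add: sym_kernel_def)
  qed
  finally show ?thesis .
qed

section \<open>Block-symmetric vectors: the powers of L_n\<close>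

text \<open>A word of length \<open>n * k\<close> consists of \<open>k\<close> blocks of length \<open>n\<close>; a vector lies in
  \<open>L_n^{\<otimes>k}\<close> iff it depends on a word only through the zero counts of its blocks.\<close>

definition block_zeros :: "nat \<Rightarrow> nat \<Rightarrow> nat list \<Rightarrow> nat list" where
  "block_zeros n k w = map (\<lambda>b. zeros (take n (drop (n * b) w))) [0..<k]"

lemma length_block_zeros[simp]: "length (block_zeros n k w) = k"
  by (simp add: block_zeros_def)

lemma block_zeros_1:
  assumes "length w = n"
  shows "block_zeros n 1 w = [zeros w]" "block_zeros n (Suc 0) w = [zeros w]"
  using assms by (simp_all add: block_zeros_def)

lemma block_zeros_append:
  assumes x: "length x = n * a"
  shows "block_zeros n (a + b) (x @ y) = block_zeros n a x @ block_zeros n b y"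
proof (rule nth_equalityI)
  fix i assume "i < length (block_zeros n (a + b) (x @ y))"
  then have i: "i < a + b" by simp
  show "block_zeros n (a + b) (x @ y) ! i = (block_zeros n a x @ block_zeros n b y) ! i"
  proof (cases "i < a")
    case True
    then have "n * i + n \<le> length x"
      using x by (metis Suc_leI mult_Suc_right mult_le_mono2 add.commute)
    then show ?thesis using True i by (simp add: block_zeros_def nth_append)
  next
    case False
    moreover have "n * i = length x + n * (i - a)" using x False by (simp add: diff_mult_distrib2)
    moreover have "i - a < b" using False i by simp
    ultimately show ?thesis using i by (simp add: block_zeros_def nth_append)
  qed
qed simp

lemma block_zeros_append3:
  "length x = n * a \<Longrightarrow> length y = n * b
      \<Longrightarrow> block_zeros n (a + b + c) (x @ y @ z)
          = block_zeros n a x @ block_zeros n b y @ block_zeros n c z"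
  using block_zeros_append[of x n a "b + c" "y @ z"] block_zeros_append[of y n b c z]
  by (simp add: add.assoc)

lemma block_zeros_append_eq_iff:
  "length x = n * a \<Longrightarrow> length x' = n * a
      \<Longrightarrow> block_zeros n (a + c) (x @ y) = block_zeros n (a + c) (x' @ y')
          \<longleftrightarrow> block_zeros n a x = block_zeros n a x' \<and> block_zeros n c y = block_zeros n c y'"
  by (simp add: block_zeros_append)

lemma block_zeros_append3_eq_iff:
  "length x = n * a \<Longrightarrow> length y = n * b \<Longrightarrow> length x' = n * a \<Longrightarrow> length y' = n * b
      \<Longrightarrow> block_zeros n (a + b + c) (x @ y @ z) = block_zeros n (a + b + c) (x' @ y' @ z')
          \<longleftrightarrow> block_zeros n a x = block_zeros n a x' \<and> block_zeros n b y
              = block_zeros n b y' \<and> block_zeros n c z = block_zeros n c z'"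
  by (simp add: block_zeros_append3)

definition block_sym :: "nat \<Rightarrow> nat \<Rightarrow> tvec set" where
  "block_sym n k = {v \<in> qspace (n * k). \<forall>w\<in>qwords (n * k). \<forall>w'\<in>qwords (n * k). block_zeros n k w
      = block_zeros n k w' \<longrightarrow> v w = v w'}"

lemma block_sym_qspace: "v \<in> block_sym n k \<Longrightarrow> v \<in> qspace (n * k)"
  unfolding block_sym_def by blast

lemma block_symD:
  "v \<in> block_sym n k \<Longrightarrow> w \<in> qwords (n * k) \<Longrightarrow> w' \<in> qwords (n * k)
      \<Longrightarrow> block_zeros n k w = block_zeros n k w' \<Longrightarrow> v w = v w'"
  unfolding block_sym_def by blast

lemma block_symI:
  "v \<in> qspace (n * k)
      \<Longrightarrow> (\<And>w w'. w \<in> qwords (n * k) \<Longrightarrow> w' \<in> qwords (n * k) \<Longrightarrow> block_zeros n k w = block_zeros n k w'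
          \<Longrightarrow> v w = v w') \<Longrightarrow> v \<in> block_sym n k"
  unfolding block_sym_def by blast

lemma lin_closed_block_sym: "lin_closed (block_sym n k)"
  unfolding lin_closed_def
proof (intro allI impI)
  fix F :: "tvec set" and c assume F: "finite F" "F \<subseteq> block_sym n k"
  show "(\<lambda>w. \<Sum>u\<in>F. c u * u w) \<in> block_sym n k"
  proof (rule block_symI)
    show "(\<lambda>w. \<Sum>u\<in>F. c u * u w) \<in> qspace (n * k)"
      using F lin_closed_qspace block_sym_qspace unfolding lin_closed_def by blast
    fix w w' assume "w \<in> qwords (n * k)" "w' \<in> qwords (n * k)"
      "block_zeros n k w = block_zeros n k w'"
    then have "u w = u w'" if "u \<in> F" for u
      using block_symD F(2) that by blast
    then show "(\<Sum>u\<in>F. c u * u w) = (\<Sum>u\<in>F. c u * u w')" by (auto intro: sum.cong)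
  qed
qed

lemma block_sym_0: "block_sym n 0 = qspace 0"
  by (auto simp: block_sym_def qwords_0)

lemma qL_eq_block_sym: "qL n = block_sym n 1"
proof -
  have "block_zeros n 1 w = block_zeros n 1 w' \<longleftrightarrow> zeros w = zeros w'"
    if "w \<in> qwords n" "w' \<in> qwords n" for w w'
    using that by (simp add: block_zeros_1 qwords_length)
  then show ?thesis
    unfolding qL_eq_zero_count_sym zero_count_sym_def block_sym_def mult_1_right by blast
qed

lemma block_sym_middle_block:
  assumes v: "v \<in> block_sym n (p + 1 + r)" and x: "x \<in> qwords (n * p)" and y: "y \<in> qwords (n * r)"
    and z: "z \<in> qwords n" and a: "a \<in> qwords n" and za: "zeros z = zeros a"
  shows "v (x @ z @ y) = v (x @ a @ y)"
proof (rule block_symD[OF v])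
  have q: "n * (p + 1 + r) = n * p + n + n * r" by (simp add: algebra_simps)
  show "x @ z @ y \<in> qwords (n * (p + 1 + r))" "x @ a @ y \<in> qwords (n * (p + 1 + r))"
    unfolding q using x y z a by (simp_all add: qwords_append3I)
  show "block_zeros n (p + 1 + r) (x @ z @ y) = block_zeros n (p + 1 + r) (x @ a @ y)"
    using block_zeros_append3[of x n p z 1 r y] block_zeros_append3[of x n p a 1 r y] x z a za
    by (simp add: block_zeros_1 qwords_length)
qed

lemma qdelta_block_sym: "qdelta n \<in> block_sym n 2"
proof (rule block_symI)
  show "qdelta n \<in> qspace (n * 2)" using qdelta_qspace by (simp add: mult.commute)
  have zeros2: "block_zeros n 2 (x @ y) = [zeros x, zeros y]" if "x \<in> qwords n" "y \<in> qwords n"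
    for x y
    using block_zeros_append[of x n 1 1 y] that
      by (simp add: qwords_length block_zeros_1 numeral_2_eq_2)
  fix w w' assume w: "w \<in> qwords (n * 2)" "w' \<in> qwords (n * 2)"
    and eq: "block_zeros n 2 w = block_zeros n 2 w'"
  obtain x y x' y' where "x \<in> qwords n" "y \<in> qwords n" "w = x @ y"
    "x' \<in> qwords n" "y' \<in> qwords n" "w' = x' @ y'"
    using w by (metis mult_2_right qwords_add_split)
  then show "qdelta n w = qdelta n w'"
    using eq by (simp add: zeros2 qdelta_append qwords_length)
qed

section \<open>Contraction with \<open>\<delta>\<close>, insertion of \<open>\<delta>\<close>, and partial inner products\<close>

definition contract :: "nat \<Rightarrow> nat \<Rightarrow> tvec \<Rightarrow> tvec" where
  "contract n p v = (\<lambda>x. \<Sum>z\<in>qwords (2 * n). qdelta n z * v (take (n * p) x @ z @ drop (n * p) x))"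

definition ins_delta :: "nat \<Rightarrow> nat \<Rightarrow> tvec \<Rightarrow> tvec" where
  "ins_delta n p v
      = (\<lambda>w. qdelta n (take (2 * n) (drop (n * p) w))
          * v (take (n * p) w @ drop (n * p + 2 * n) w))"

definition inner_last :: "nat \<Rightarrow> tvec \<Rightarrow> tvec \<Rightarrow> tvec" where
  "inner_last n u v = (\<lambda>x. \<Sum>z\<in>qwords n. cnj (u z) * v (x @ z))"

lemma contract_append: "length A = n * p
    \<Longrightarrow> contract n p v (A @ B) = (\<Sum>z\<in>qwords (2 * n). qdelta n z * v (A @ z @ B))"
  by (simp add: contract_def)

lemma ins_delta_append: "length A = n * p \<Longrightarrow> length Z = 2 * n
    \<Longrightarrow> ins_delta n p v (A @ Z @ B) = qdelta n Z * v (A @ B)"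
  by (simp add: ins_delta_def)

lemma contract_qspace:
  assumes v: "v \<in> qspace (n * (K + 2))"
  shows "contract n p v \<in> qspace (n * K)"
proof (rule qspaceI)
  fix x assume x: "x \<notin> qwords (n * K)"
  have "v (take (n * p) x @ z @ drop (n * p) x) = 0" if z: "z \<in> qwords (2 * n)" for z
  proof -
    have "take (n * p) x @ z @ drop (n * p) x \<notin> qwords (n * (K + 2))"
    proof
      assume a: "take (n * p) x @ z @ drop (n * p) x \<in> qwords (n * (K + 2))"
      then have "length x = n * K" using z by (auto simp: qwords_def algebra_simps)
      moreover have "set x \<subseteq> {0,1}"
      proof -
        have "set (take (n * p) x) \<subseteq> {0,1}" "set (drop (n * p) x) \<subseteq> {0,1}"
          using a by (auto simp: qwords_def)
        then show ?thesis using set_append[of "take (n * p) x" "drop (n * p) x"] by simp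
      qed
      ultimately show False using x by (simp add: qwords_def)
    qed
    then show ?thesis using v by (rule qspaceD[rotated])
  qed
  then show "contract n p v x = 0" by (simp add: contract_def)
qed

lemma ins_delta_qspace:
  assumes v: "v \<in> qspace (n * (p + r))"
  shows "ins_delta n p v \<in> qspace (n * (p + r + 2))"
proof (rule qspaceI)
  fix w assume w: "w \<notin> qwords (n * (p + r + 2))"
  show "ins_delta n p v w = 0"
  proof (cases "take (2 * n) (drop (n * p) w) \<in> qwords (2 * n)")
    case False
    then have "qdelta n (take (2 * n) (drop (n * p) w)) = 0" using qdelta_qspace qspaceD by blast
    then show ?thesis by (simp add: ins_delta_def)
  next
    case True
    then have "length (take (2 * n) (drop (n * p) w)) = 2 * n" by (rule qwords_length)
    then have lw: "length w \<ge> n * p + 2 * n"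
      by (cases "n = 0") (auto simp: min_def split: if_splits)
    have "take (n * p) w @ drop (n * p + 2 * n) w \<notin> qwords (n * (p + r))"
    proof
      assume a: "take (n * p) w @ drop (n * p + 2 * n) w \<in> qwords (n * (p + r))"
      have "w = take (n * p) w @ take (2 * n) (drop (n * p) w) @ drop (n * p + 2 * n) w"
        by (metis append.assoc append_take_drop_id drop_drop add.commute)
      moreover have "take (n * p) w @ take (2 * n) (drop (n * p) w) @ drop (n * p + 2 * n) w
          \<in> qwords (n * (p + r + 2))"
        using a True lw by (auto simp: qwords_def algebra_simps)
      ultimately show False using w by simp
    qed
    then show ?thesis using v by (simp add: ins_delta_def qspaceD)
  qed
qed

lemma inner_last_qspace:
  assumes v: "v \<in> qspace (n * (K + 1))"
  shows "inner_last n u v \<in> qspace (n * K)"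
proof (rule qspaceI)
  fix x assume x: "x \<notin> qwords (n * K)"
  have "x @ z \<notin> qwords (n * (K + 1))" if "z \<in> qwords n" for z
    using x that by (auto simp: qwords_def algebra_simps)
  then show "inner_last n u v x = 0" using v by (simp add: inner_last_def qspaceD)
qed

lemma qtprod_qspace: "f \<in> qspace a \<Longrightarrow> g \<in> qspace b \<Longrightarrow> qtprod a f g \<in> qspace (a + b)"
proof (rule qspaceI)
  fix w assume f: "f \<in> qspace a" and g: "g \<in> qspace b" and w: "w \<notin> qwords (a + b)"
  show "qtprod a f g w = 0"
  proof (cases "take a w \<in> qwords a")
    case False then show ?thesis using f by (simp add: qtprod_def qspaceD)
  next
    case True
    have "drop a w \<notin> qwords b"
    proof
      assume "drop a w \<in> qwords b"
      from qwords_appendI[OF True this] w show False by simp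
    qed
    then show ?thesis using g by (simp add: qtprod_def qspaceD)
  qed
qed

lemma qtprod_block_sym:
  assumes x: "x \<in> block_sym n a" and y: "y \<in> block_sym n b"
  shows "qtprod (n * a) x y \<in> block_sym n (a + b)"
proof (rule block_symI)
  show "qtprod (n * a) x y \<in> qspace (n * (a + b))"
    using qtprod_qspace[OF block_sym_qspace[OF x] block_sym_qspace[OF y]] by (simp add: distrib_left)
  fix w w' assume w: "w \<in> qwords (n * (a + b))" "w' \<in> qwords (n * (a + b))"
    "block_zeros n (a + b) w = block_zeros n (a + b) w'"
  have "w \<in> qwords (n * a + n * b)" using w(1) by (simp add: distrib_left)
  then obtain A B where AB: "A \<in> qwords (n * a)" "B \<in> qwords (n * b)" "w = A @ B"
    using qwords_add_split by blast
  have "w' \<in> qwords (n * a + n * b)" using w(2) by (simp add: distrib_left)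
  then obtain A' B' where AB': "A' \<in> qwords (n * a)" "B' \<in> qwords (n * b)" "w' = A' @ B'"
    using qwords_add_split by blast
  have l: "length A = n * a" "length A' = n * a" using AB AB' by (simp_all add: qwords_length)
  have "block_zeros n a A = block_zeros n a A'" "block_zeros n b B = block_zeros n b B'"
    using w(3) block_zeros_append_eq_iff[OF l, of b B B'] AB(3) AB'(3) by simp_all
  then have "x A = x A'" "y B = y B'"
    using block_symD[OF x AB(1) AB'(1)] block_symD[OF y AB(2) AB'(2)] by simp_all
  then show "qtprod (n * a) x y w = qtprod (n * a) x y w'"
    using AB(3) AB'(3) l by (simp add: qtprod_append)
qed

lemma contract_block_sym:
  assumes v: "v \<in> block_sym n (p + 2 + r)"
  shows "contract n p v \<in> block_sym n (p + r)"
proof (rule block_symI)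
  show "contract n p v \<in> qspace (n * (p + r))"
    using contract_qspace[of v n "p + r" p] block_sym_qspace[OF v] by (simp add: algebra_simps)
  fix x x' assume x: "x \<in> qwords (n * (p + r))" "x' \<in> qwords (n * (p + r))"
    "block_zeros n (p + r) x = block_zeros n (p + r) x'"
  have "x \<in> qwords (n * p + n * r)" using x(1) by (simp add: distrib_left)
  then obtain A B where AB: "A \<in> qwords (n * p)" "B \<in> qwords (n * r)" "x = A @ B"
    using qwords_add_split by blast
  have "x' \<in> qwords (n * p + n * r)" using x(2) by (simp add: distrib_left)
  then obtain A' B' where AB': "A' \<in> qwords (n * p)" "B' \<in> qwords (n * r)" "x' = A' @ B'"
    using qwords_add_split by blast
  have l: "length A = n * p" "length A' = n * p" using AB AB' by (simp_all add: qwords_length)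
  have e: "block_zeros n p A = block_zeros n p A'" "block_zeros n r B = block_zeros n r B'"
    using x(3) block_zeros_append_eq_iff[OF l, of r B B'] AB(3) AB'(3) by simp_all
  have "v (A @ z @ B) = v (A' @ z @ B')" if z: "z \<in> qwords (2 * n)" for z
  proof (rule block_symD[OF v])
    have lz: "length z = n * 2" using z by (simp add: qwords_length)
    have q: "n * (p + 2 + r) = n * p + n * 2 + n * r" by (simp add: algebra_simps)
    show "A @ z @ B \<in> qwords (n * (p + 2 + r))" unfolding q
      using AB z by (intro qwords_append3I) (simp_all add: mult.commute)
    show "A' @ z @ B' \<in> qwords (n * (p + 2 + r))" unfolding q
      using AB' z by (intro qwords_append3I) (simp_all add: mult.commute)
    show "block_zeros n (p + 2 + r) (A @ z @ B) = block_zeros n (p + 2 + r) (A' @ z @ B')"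
      using block_zeros_append3_eq_iff[of A n p z 2 A' z r B B'] l lz e by simp
  qed
  then show "contract n p v x = contract n p v x'"
    using AB(3) AB'(3) l by (simp add: contract_append)
qed

lemma ins_delta_block_sym:
  assumes v: "v \<in> block_sym n (p + r)"
  shows "ins_delta n p v \<in> block_sym n (p + 2 + r)"
proof (rule block_symI)
  show "ins_delta n p v \<in> qspace (n * (p + 2 + r))"
    using ins_delta_qspace[of v n p r] block_sym_qspace[OF v] by (simp add: algebra_simps)
  have q: "n * (p + 2 + r) = n * p + n * 2 + n * r" by (simp add: algebra_simps)
  fix w w' assume w: "w \<in> qwords (n * (p + 2 + r))" "w' \<in> qwords (n * (p + 2 + r))"
    "block_zeros n (p + 2 + r) w = block_zeros n (p + 2 + r) w'"
  obtain A Z B where AZB: "A \<in> qwords (n * p)" "Z \<in> qwords (n * 2)" "B \<in> qwords (n * r)"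
    "w = A @ Z @ B"
    using qwords_add3_split[of w "n * p" "n * 2" "n * r"] w(1) unfolding q by blast
  obtain A' Z' B' where AZB': "A' \<in> qwords (n * p)" "Z' \<in> qwords (n * 2)" "B' \<in> qwords (n * r)"
    "w' = A' @ Z' @ B'"
    using qwords_add3_split[of w' "n * p" "n * 2" "n * r"] w(2) unfolding q by blast
  have l: "length A = n * p" "length A' = n * p" "length Z = n * 2" "length Z' = n * 2"
    using AZB AZB' by (simp_all add: qwords_length)
  have e: "block_zeros n p A = block_zeros n p A'" "block_zeros n 2 Z = block_zeros n 2 Z'"
    "block_zeros n r B = block_zeros n r B'"
    using w(3) block_zeros_append3_eq_iff[of A n p Z 2 A' Z' r B B'] l AZB(4) AZB'(4) by simp_all
  have "qdelta n Z = qdelta n Z'"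
    using block_symD[OF qdelta_block_sym AZB(2) AZB'(2) e(2)] .
  moreover have "v (A @ B) = v (A' @ B')"
  proof (rule block_symD[OF v])
    show "A @ B \<in> qwords (n * (p + r))" using AZB by (simp add: distrib_left qwords_appendI)
    show "A' @ B' \<in> qwords (n * (p + r))" using AZB' by (simp add: distrib_left qwords_appendI)
    show "block_zeros n (p + r) (A @ B) = block_zeros n (p + r) (A' @ B')"
      using block_zeros_append_eq_iff[of A n p A' r B B'] l e by simp
  qed
  ultimately show "ins_delta n p v w = ins_delta n p v w'"
    using AZB(4) AZB'(4) l by (simp add: ins_delta_append mult.commute)
qed

lemma inner_last_block_sym:
  assumes v: "v \<in> block_sym n (K + 1)"
  shows "inner_last n u v \<in> block_sym n K"
proof (rule block_symI)
  show "inner_last n u v \<in> qspace (n * K)" using inner_last_qspace block_sym_qspace[OF v] by blast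
  fix x x' assume x: "x \<in> qwords (n * K)" "x' \<in> qwords (n * K)"
    "block_zeros n K x = block_zeros n K x'"
  have l: "length x = n * K" "length x' = n * K" using x by (simp_all add: qwords_length)
  have "v (x @ z) = v (x' @ z)" if z: "z \<in> qwords n" for z
  proof (rule block_symD[OF v])
    show "x @ z \<in> qwords (n * (K + 1))"
      using x z qwords_appendI[of x "n * K" z n] by (simp add: algebra_simps)
    show "x' @ z \<in> qwords (n * (K + 1))"
      using x z qwords_appendI[of x' "n * K" z n] by (simp add: algebra_simps)
    show "block_zeros n (K + 1) (x @ z) = block_zeros n (K + 1) (x' @ z)"
      using block_zeros_append[OF l(1), of 1 z] block_zeros_append[OF l(2), of 1 z] x(3) by simp
  qed
  then show "inner_last n u v x = inner_last n u v x'" by (simp add: inner_last_def)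
qed

lemma qinner_ins_delta_left:
  "qinner (n * (p + 2 + r)) (ins_delta n p u) v = qinner (n * (p + r)) u (contract n p v)"
proof -
  have q1: "n * (p + 2 + r) = n * p + 2 * n + n * r" by (simp add: algebra_simps)
  have q2: "n * (p + r) = n * p + n * r" by (simp add: algebra_simps)
  have "qinner (n * (p + 2 + r)) (ins_delta n p u) v
      = (\<Sum>A\<in>qwords (n * p). \<Sum>Z\<in>qwords (2 * n). \<Sum>B\<in>qwords (n * r). cnj (ins_delta n p u (A @ Z @ B))
          * v (A @ Z @ B))"
    unfolding qinner_def q1 by (rule sum_qwords_add3)
  also have "\<dots>
      = (\<Sum>A\<in>qwords (n * p). \<Sum>Z\<in>qwords (2 * n). \<Sum>B\<in>qwords (n * r). cnj (u (A @ B))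
          * (qdelta n Z * v (A @ Z @ B)))"
    by (intro sum.cong[OF refl]) (simp add: ins_delta_append qwords_length)
  also have "\<dots>
      = (\<Sum>A\<in>qwords (n * p). \<Sum>B\<in>qwords (n * r). \<Sum>Z\<in>qwords (2 * n). cnj (u (A @ B))
          * (qdelta n Z * v (A @ Z @ B)))"
    by (rule sum.cong[OF refl], rule sum.swap)
  also have "\<dots> = (\<Sum>A\<in>qwords (n * p). \<Sum>B\<in>qwords (n * r). cnj (u (A @ B)) * contract n p v (A @ B))"
    by (intro sum.cong[OF refl]) (simp add: contract_append qwords_length sum_distrib_left)
  also have "\<dots> = qinner (n * (p + r)) u (contract n p v)"
    unfolding qinner_def q2 by (rule sum_qwords_add[symmetric])
  finally show ?thesis .
qed

lemma qinner_ins_delta_right: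
  "qinner (n * (p + 2 + r)) v (ins_delta n p u) = qinner (n * (p + r)) (contract n p v) u"
  using qinner_ins_delta_left[of n p r u v] by (metis qinner_cnj)

lemma contract_ins_delta_same:
  assumes x: "x \<in> qwords (n * (p + r))"
  shows "contract n p (ins_delta n p v) x = v x"
proof -
  have e: "n * (p + r) = n * p + n * r" by (simp add: algebra_simps)
  from x have "x \<in> qwords (n * p + n * r)" by (simp only: e)
  then obtain A B where AB: "A \<in> qwords (n * p)" "B \<in> qwords (n * r)" "x = A @ B"
    by (rule qwords_add_split)
  have lA: "length A = n * p" using AB by (simp add: qwords_length)
  have "contract n p (ins_delta n p v) x
      = (\<Sum>z\<in>qwords (2 * n). qdelta n z * ins_delta n p v (A @ z @ B))"
    using AB contract_append[OF lA] by simp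
  also have "\<dots> = (\<Sum>z\<in>qwords (2 * n). qdelta n z * qdelta n z * v (A @ B))"
  proof (rule sum.cong[OF refl])
    fix z assume z: "z \<in> qwords (2 * n)"
    then have "length z = 2 * n" by (rule qwords_length)
    from ins_delta_append[OF lA this, of v B] show "qdelta n z * ins_delta n p v (A @ z @ B)
        = qdelta n z * qdelta n z * v (A @ B)"
      by simp
  qed
  also have "\<dots> = (\<Sum>z\<in>qwords (2 * n). qdelta n z * qdelta n z) * v (A @ B)"
    by (rule sum_distrib_right[symmetric])
  also have "\<dots> = v x" using AB by (simp add: sum_qdelta_square)
  finally show ?thesis .
qed

lemma contract_ins_delta_far_right:
  assumes x: "x \<in> qwords (n * (p + t + 2 + r))"
  shows "contract n p (ins_delta n (p + 2 + t) v) x = ins_delta n (p + t) (contract n p v) x"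
proof -
  have e: "n * (p + t + 2 + r) = n * p + n * t + 2 * n + n * r" by (simp add: algebra_simps)
  from x have "x \<in> qwords (n * p + n * t + 2 * n + n * r)" by (simp only: e)
  then obtain A Y Z B where w: "A \<in> qwords (n * p)" "Y \<in> qwords (n * t)" "Z \<in> qwords (2 * n)"
    "B \<in> qwords (n * r)" "x = A @ Y @ Z @ B"
    by (rule qwords_add4_split)
  have l: "length A = n * p" "length Y = n * t" "length Z = 2 * n"
    using w by (simp_all add: qwords_length)
  have "contract n p (ins_delta n (p + 2 + t) v) x
      = (\<Sum>z\<in>qwords (2 * n). qdelta n z * ins_delta n (p + 2 + t) v ((A @ z @ Y) @ Z @ B))"
    using w l contract_append[of A n p "ins_delta n (p + 2 + t) v" "Y @ Z @ B"] by simp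
  also have "\<dots> = (\<Sum>z\<in>qwords (2 * n). qdelta n z * (qdelta n Z * v (A @ z @ Y @ B)))"
  proof (rule sum.cong[OF refl])
    fix z assume z: "z \<in> qwords (2 * n)"
    have "length (A @ z @ Y) = n * (p + 2 + t)" using l z by (simp add: qwords_length algebra_simps)
    from ins_delta_append[OF this l(3), of v B] show "qdelta n z
        * ins_delta n (p + 2 + t) v ((A @ z @ Y) @ Z @ B)
            = qdelta n z * (qdelta n Z * v (A @ z @ Y @ B))"
      by simp
  qed
  also have "\<dots> = qdelta n Z * (\<Sum>z\<in>qwords (2 * n). qdelta n z * v (A @ z @ Y @ B))"
    by (simp add: sum_distrib_left ac_simps)
  also have "\<dots> = qdelta n Z * contract n p v (A @ Y @ B)"
    using l contract_append[of A n p v "Y @ B"] by simp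
  also have "\<dots> = ins_delta n (p + t) (contract n p v) ((A @ Y) @ Z @ B)"
  proof -
    have "length (A @ Y) = n * (p + t)" using l by (simp add: algebra_simps)
    from ins_delta_append[OF this l(3), of "contract n p v" B] show ?thesis by simp
  qed
  finally show ?thesis using w by simp
qed

lemma contract_ins_delta_far_left:
  assumes x: "x \<in> qwords (n * (j + 2 + t + r))"
  shows "contract n (j + 2 + t) (ins_delta n j v) x = ins_delta n j (contract n (j + t) v) x"
proof -
  have e: "n * (j + 2 + t + r) = n * j + 2 * n + n * t + n * r" by (simp add: algebra_simps)
  from x have "x \<in> qwords (n * j + 2 * n + n * t + n * r)" by (simp only: e)
  then obtain A Z Y B where w: "A \<in> qwords (n * j)" "Z \<in> qwords (2 * n)" "Y \<in> qwords (n * t)"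
    "B \<in> qwords (n * r)" "x = A @ Z @ Y @ B"
    by (rule qwords_add4_split)
  have l: "length A = n * j" "length Y = n * t" "length Z = 2 * n"
    using w by (simp_all add: qwords_length)
  have l2: "length (A @ Z @ Y) = n * (j + 2 + t)" using l by (simp add: algebra_simps)
  have "contract n (j + 2 + t) (ins_delta n j v) x
      = (\<Sum>z\<in>qwords (2 * n). qdelta n z * ins_delta n j v ((A @ Z @ Y) @ z @ B))"
    using w contract_append[OF l2, of "ins_delta n j v" B] by simp
  also have "\<dots> = (\<Sum>z\<in>qwords (2 * n). qdelta n z * (qdelta n Z * v (A @ Y @ z @ B)))"
  proof (rule sum.cong[OF refl])
    fix z assume z: "z \<in> qwords (2 * n)"
    from ins_delta_append[OF l(1) l(3), of v "Y @ z @ B"] show "qdelta n z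
        * ins_delta n j v ((A @ Z @ Y) @ z @ B) = qdelta n z * (qdelta n Z * v (A @ Y @ z @ B))"
      by simp
  qed
  also have "\<dots> = qdelta n Z * (\<Sum>z\<in>qwords (2 * n). qdelta n z * v (A @ Y @ z @ B))"
    by (simp add: sum_distrib_left ac_simps)
  also have "\<dots> = qdelta n Z * contract n (j + t) v (A @ Y @ B)"
  proof -
    have "length (A @ Y) = n * (j + t)" using l by (simp add: algebra_simps)
    from contract_append[OF this, of v B] show ?thesis by simp
  qed
  also have "\<dots> = ins_delta n j (contract n (j + t) v) (A @ Z @ Y @ B)"
    using ins_delta_append[OF l(1) l(3), of "contract n (j + t) v" "Y @ B"] by simp
  finally show ?thesis using w by simp
qed


lemma contract_ins_delta_next:
  assumes v: "v \<in> block_sym n (p + 1 + r)" and x: "x \<in> qwords (n * (p + 1 + r))"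
  shows "contract n p (ins_delta n (p + 1) v) x = complex_of_real ((-1)^n / real (n + 1)) * v x"
proof -
  have e: "n * (p + 1 + r) = n * p + n + n * r" by (simp add: algebra_simps)
  from x have "x \<in> qwords (n * p + n + n * r)" by (simp only: e)
  then obtain A a B where w: "A \<in> qwords (n * p)" "a \<in> qwords n" "B \<in> qwords (n * r)"
    "x = A @ a @ B"
    by (rule qwords_add3_split)
  have l: "length A = n * p" "length a = n" using w by (simp_all add: qwords_length)
  have "contract n p (ins_delta n (p + 1) v) x
      = (\<Sum>z\<in>qwords (n + n). qdelta n z * ins_delta n (p + 1) v (A @ z @ a @ B))"
    using w contract_append[OF l(1), of "ins_delta n (p + 1) v" "a @ B"] by (simp add: mult_2)
  also have "\<dots>
      = (\<Sum>z1\<in>qwords n. \<Sum>z2\<in>qwords n. qdelta n (z1 @ z2)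
          * ins_delta n (p + 1) v (A @ (z1 @ z2) @ a @ B))"
    by (rule sum_qwords_add)
  also have "\<dots>
      = (\<Sum>z1\<in>qwords n. \<Sum>z2\<in>qwords n. qdelta n (z1 @ z2) * (qdelta n (z2 @ a) * v (A @ z1 @ B)))"
  proof (rule sum.cong[OF refl], rule sum.cong[OF refl])
    fix z1 z2 assume z: "z1 \<in> qwords n" "z2 \<in> qwords n"
    have l1: "length (A @ z1) = n * (p + 1)" using l z by (simp add: qwords_length)
    have l2: "length (z2 @ a) = 2 * n" using l z by (simp add: qwords_length)
    from ins_delta_append[OF l1 l2, of v B] show "qdelta n (z1 @ z2)
        * ins_delta n (p + 1) v (A @ (z1 @ z2) @ a @ B)
            = qdelta n (z1 @ z2) * (qdelta n (z2 @ a) * v (A @ z1 @ B))"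
      by simp
  qed
  also have "\<dots>
      = (\<Sum>z1\<in>qwords n. (\<Sum>z2\<in>qwords n. qdelta n (z1 @ z2) * qdelta n (z2 @ a)) * v (A @ z1 @ B))"
    by (rule sum.cong[OF refl]) (simp only: sum_distrib_right mult.assoc)
  also have "\<dots>
      = (\<Sum>z1\<in>qwords n. complex_of_real ((-1)^n / real (n + 1))
          * (sym_kernel n z1 a * v (A @ z1 @ B)))"
    using w by (intro sum.cong[OF refl]) (simp add: qdelta_zigzag)
  also have "\<dots>
      = complex_of_real ((-1)^n / real (n + 1))
          * (\<Sum>z1\<in>qwords n. sym_kernel n z1 a * v (A @ z1 @ B))"
    by (simp add: sum_distrib_left)
  also have "(\<Sum>z1\<in>qwords n. sym_kernel n z1 a * v (A @ z1 @ B)) = v (A @ a @ B)"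
    using sym_kernel_reproduces[OF w(2), of "\<lambda>z. v (A @ z @ B)"]
      block_sym_middle_block[OF v w(1) w(3) _ w(2)] by simp
  finally show ?thesis using w by simp
qed

lemma contract_ins_delta_prev:
  assumes v: "v \<in> block_sym n (p + 1 + r)" and x: "x \<in> qwords (n * (p + 1 + r))"
  shows "contract n (p + 1) (ins_delta n p v) x = complex_of_real ((-1)^n / real (n + 1)) * v x"
proof -
  have e: "n * (p + 1 + r) = n * p + n + n * r" by (simp add: algebra_simps)
  from x have "x \<in> qwords (n * p + n + n * r)" by (simp only: e)
  then obtain A a B where w: "A \<in> qwords (n * p)" "a \<in> qwords n" "B \<in> qwords (n * r)"
    "x = A @ a @ B"
    by (rule qwords_add3_split)
  have l: "length A = n * p" "length a = n" using w by (simp_all add: qwords_length)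
  have l0: "length (A @ a) = n * (p + 1)" using l by simp
  have "contract n (p + 1) (ins_delta n p v) x
      = (\<Sum>z\<in>qwords (n + n). qdelta n z * ins_delta n p v ((A @ a) @ z @ B))"
    using w contract_append[OF l0, of "ins_delta n p v" B] by (simp add: mult_2)
  also have "\<dots>
      = (\<Sum>z1\<in>qwords n. \<Sum>z2\<in>qwords n. qdelta n (z1 @ z2)
          * ins_delta n p v ((A @ a) @ (z1 @ z2) @ B))"
    by (rule sum_qwords_add)
  also have "\<dots>
      = (\<Sum>z1\<in>qwords n. \<Sum>z2\<in>qwords n. qdelta n (z1 @ z2) * (qdelta n (a @ z1) * v (A @ z2 @ B)))"
  proof (rule sum.cong[OF refl], rule sum.cong[OF refl])
    fix z1 z2 assume z: "z1 \<in> qwords n" "z2 \<in> qwords n"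
    have l2: "length (a @ z1) = 2 * n" using l z by (simp add: qwords_length)
    from ins_delta_append[OF l(1) l2, of v "z2 @ B"] show "qdelta n (z1 @ z2)
        * ins_delta n p v ((A @ a) @ (z1 @ z2) @ B)
            = qdelta n (z1 @ z2) * (qdelta n (a @ z1) * v (A @ z2 @ B))"
      by simp
  qed
  also have "\<dots>
      = (\<Sum>z2\<in>qwords n. \<Sum>z1\<in>qwords n. qdelta n (a @ z1) * qdelta n (z1 @ z2) * v (A @ z2 @ B))"
    by (subst sum.swap) (simp add: ac_simps)
  also have "\<dots>
      = (\<Sum>z2\<in>qwords n. (\<Sum>z1\<in>qwords n. qdelta n (a @ z1) * qdelta n (z1 @ z2)) * v (A @ z2 @ B))"
    by (rule sum.cong[OF refl]) (simp only: sum_distrib_right)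
  also have "\<dots>
      = (\<Sum>z2\<in>qwords n. complex_of_real ((-1)^n / real (n + 1))
          * (sym_kernel n z2 a * v (A @ z2 @ B)))"
    using w by (intro sum.cong[OF refl]) (simp add: qdelta_zigzag sym_kernel_commute)
  also have "\<dots>
      = complex_of_real ((-1)^n / real (n + 1))
          * (\<Sum>z2\<in>qwords n. sym_kernel n z2 a * v (A @ z2 @ B))"
    by (simp add: sum_distrib_left)
  also have "(\<Sum>z2\<in>qwords n. sym_kernel n z2 a * v (A @ z2 @ B)) = v (A @ a @ B)"
    using sym_kernel_reproduces[OF w(2), of "\<lambda>z. v (A @ z @ B)"]
      block_sym_middle_block[OF v w(1) w(3) _ w(2)] by simp
  finally show ?thesis using w by simp
qed

lemma contract_qtprod:
  assumes A: "length A = n * p" and B: "length B = n * r"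
  shows "contract n p (qtprod (n * (p + 2 + r)) f l) (A @ B @ c) = contract n p f (A @ B) * l c"
proof -
  have "contract n p (qtprod (n * (p + 2 + r)) f l) (A @ B @ c)
      = (\<Sum>z\<in>qwords (2 * n). qdelta n z * qtprod (n * (p + 2 + r)) f l ((A @ z @ B) @ c))"
    using contract_append[OF A, of "qtprod (n * (p + 2 + r)) f l" "B @ c"] by simp
  also have "\<dots> = (\<Sum>z\<in>qwords (2 * n). qdelta n z * f (A @ z @ B) * l c)"
  proof (rule sum.cong[OF refl])
    fix z assume z: "z \<in> qwords (2 * n)"
    have "length (A @ z @ B) = n * (p + 2 + r)"
      using A B z by (simp add: qwords_length algebra_simps)
    from qtprod_append[OF this, of f l c] show "qdelta n z
        * qtprod (n * (p + 2 + r)) f l ((A @ z @ B) @ c) = qdelta n z * f (A @ z @ B) * l c"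
      by simp
  qed
  also have "\<dots> = (\<Sum>z\<in>qwords (2 * n). qdelta n z * f (A @ z @ B)) * l c"
    by (rule sum_distrib_right[symmetric])
  also have "\<dots> = contract n p f (A @ B) * l c"
    using contract_append[OF A, of f B] by simp
  finally show ?thesis .
qed

lemma contract_inner_last:
  assumes A: "length A = n * p"
  shows "contract n p (inner_last n u v) (A @ B) = inner_last n u (contract n p v) (A @ B)"
proof -
  have "contract n p (inner_last n u v) (A @ B)
      = (\<Sum>z\<in>qwords (2 * n). \<Sum>z'\<in>qwords n. qdelta n z * (cnj (u z') * v (A @ z @ B @ z')))"
    using A by (simp add: contract_append inner_last_def sum_distrib_left)
  also have "\<dots> = (\<Sum>z'\<in>qwords n. \<Sum>z\<in>qwords (2 * n). qdelta n z * (cnj (u z') * v (A @ z @ B @ z')))"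
    by (rule sum.swap)
  also have "\<dots> = inner_last n u (contract n p v) (A @ B)"
    using A contract_append[of A n p v] by (simp add: inner_last_def sum_distrib_left ac_simps)
  finally show ?thesis .
qed

lemma contract_contract:
  assumes A: "length A = n * p" and Y: "length Y = n * t"
  shows "contract n p (contract n (p + 2 + t) v) (A @ Y @ B)
      = contract n (p + t) (contract n p v) (A @ Y @ B)"
proof -
  have "contract n p (contract n (p + 2 + t) v) (A @ Y @ B)
      = (\<Sum>z\<in>qwords (2 * n). qdelta n z * contract n (p + 2 + t) v ((A @ z @ Y) @ B))"
    using contract_append[OF A, of "contract n (p + 2 + t) v" "Y @ B"] by simp
  also have "\<dots>
      = (\<Sum>z\<in>qwords (2 * n). \<Sum>z'\<in>qwords (2 * n). qdelta n z
          * (qdelta n z' * v (A @ z @ Y @ z' @ B)))"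
  proof (rule sum.cong[OF refl])
    fix z assume z: "z \<in> qwords (2 * n)"
    have "length (A @ z @ Y) = n * (p + 2 + t)"
      using A Y z by (simp add: qwords_length algebra_simps)
    from contract_append[OF this, of v B] show "qdelta n z
        * contract n (p + 2 + t) v ((A @ z @ Y) @ B)
            = (\<Sum>z'\<in>qwords (2 * n). qdelta n z * (qdelta n z' * v (A @ z @ Y @ z' @ B)))"
      by (simp add: sum_distrib_left)
  qed
  also have "\<dots>
      = (\<Sum>z'\<in>qwords (2 * n). \<Sum>z\<in>qwords (2 * n). qdelta n z'
          * (qdelta n z * v (A @ z @ Y @ z' @ B)))"
    by (subst sum.swap) (simp add: ac_simps)
  also have "\<dots> = (\<Sum>z'\<in>qwords (2 * n). qdelta n z' * contract n p v (A @ Y @ z' @ B))"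
    using contract_append[OF A, of v] by (simp add: sum_distrib_left)
  also have "\<dots> = contract n (p + t) (contract n p v) ((A @ Y) @ B)"
  proof -
    have "length (A @ Y) = n * (p + t)" using A Y by (simp add: algebra_simps)
    from contract_append[OF this, of "contract n p v" B] show ?thesis by simp
  qed
  finally show ?thesis by simp
qed

lemma qinner_qtprod_inner_last:
  "qinner (n * K + n) (qtprod (n * K) f u) v = qinner (n * K) f (inner_last n u v)"
proof -
  have "qinner (n * K + n) (qtprod (n * K) f u) v
      = (\<Sum>x\<in>qwords (n * K). \<Sum>z\<in>qwords n. cnj (f x * u z) * v (x @ z))"
    unfolding qinner_def sum_qwords_add
      by (intro sum.cong[OF refl]) (simp add: qtprod_append qwords_length)
  also have "\<dots> = qinner (n * K) f (inner_last n u v)"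
    by (simp add: qinner_def inner_last_def sum_distrib_left ac_simps)
  finally show ?thesis .
qed


lemma block_sym_expand_last:
  assumes v: "v \<in> block_sym n (K + 1)"
  shows "v = (\<lambda>w. \<Sum>j\<le>n. qtprod (n * K) (inner_last n (sym_basis n j) v) (sym_basis n j) w)"
proof (rule qspace_eqI[where N="n * K + n"])
  show "v \<in> qspace (n * K + n)" using block_sym_qspace[OF v] by (simp add: algebra_simps)
  have "(\<lambda>w. \<Sum>j\<le>n. 1 * qtprod (n * K) (inner_last n (sym_basis n j) v) (sym_basis n j) w)
      \<in> qspace (n * K + n)"
  proof (rule lin_closed_sum[OF lin_closed_qspace])
    fix j
    have "inner_last n (sym_basis n j) v \<in> qspace (n * K)"
      using inner_last_qspace block_sym_qspace[OF v] by blast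
    then show "qtprod (n * K) (inner_last n (sym_basis n j) v) (sym_basis n j) \<in> qspace (n * K + n)"
      using sym_basis_qspace by (rule qtprod_qspace)
  qed simp
  then show "(\<lambda>w. \<Sum>j\<le>n. qtprod (n * K) (inner_last n (sym_basis n j) v) (sym_basis n j) w)
      \<in> qspace (n * K + n)" by simp
  fix w assume w: "w \<in> qwords (n * K + n)"
  then obtain x a where xa: "x \<in> qwords (n * K)" "a \<in> qwords n" "w = x @ a"
    by (rule qwords_add_split)
  have lx: "length x = n * K" using xa by (simp add: qwords_length)
  have "(\<Sum>j\<le>n. qtprod (n * K) (inner_last n (sym_basis n j) v) (sym_basis n j) w)
      = (\<Sum>j\<le>n. \<Sum>z\<in>qwords n. (sym_basis n j z * sym_basis n j a) * v (x @ z))"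
    using xa lx by (simp add: qtprod_append inner_last_def cnj_sym_basis sum_distrib_left
      sum_distrib_right ac_simps)
  also have "\<dots> = (\<Sum>z\<in>qwords n. \<Sum>j\<le>n. (sym_basis n j z * sym_basis n j a) * v (x @ z))"
    by (rule sum.swap)
  also have "\<dots> = (\<Sum>z\<in>qwords n. (\<Sum>j\<le>n. sym_basis n j z * sym_basis n j a) * v (x @ z))"
    by (rule sum.cong[OF refl]) (rule sum_distrib_right[symmetric])
  also have "\<dots> = (\<Sum>z\<in>qwords n. sym_kernel n z a * v (x @ z))"
    using xa by (intro sum.cong[OF refl]) (simp add: sum_sym_basis_products)
  also have "\<dots> = v (x @ a)"
  proof (rule sym_kernel_reproduces[OF xa(2)])
    fix z assume z: "z \<in> qwords n" "zeros z = zeros a"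
    have "v (x @ z @ []) = v (x @ a @ [])"
      using block_sym_middle_block[of v n K 0 x "[]" z a] v xa z by (simp add: qwords_0)
    then show "v (x @ z) = v (x @ a)" by simp
  qed
  finally show "v w = (\<Sum>j\<le>n. qtprod (n * K) (inner_last n (sym_basis n j) v) (sym_basis n j) w)"
    using xa by simp
qed

lemma qtprod_qdelta_eq_ins_delta:
  assumes a: "a \<in> qspace (n * p)"
  shows "qtprod (n * (p + 2)) (qtprod (n * p) a (\<lambda>w. c * qdelta n w)) b
      = (\<lambda>w. c * ins_delta n p (qtprod (n * p) a b) w)"
proof
  fix w
  show "qtprod (n * (p + 2)) (qtprod (n * p) a (\<lambda>w. c * qdelta n w)) b w
      = c * ins_delta n p (qtprod (n * p) a b) w"
  proof (cases "length w \<ge> n * p")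
    case False
    then have "take (n * p) w \<notin> qwords (n * p)" "w \<notin> qwords (n * p)" by (auto simp: qwords_def)
    moreover have "take (n * p) (take (n * (p + 2)) w) = w" using False by (simp add: min_def)
    ultimately show ?thesis using a False by (simp add: qtprod_def ins_delta_def qspaceD)
  next
    case True
    then obtain x y where w: "w = x @ y" and x: "length x = n * p"
      by (metis append_take_drop_id length_take min_absorb2)
    have "n * (p + 2) = n * p + 2 * n" by (simp add: algebra_simps)
    then show ?thesis using x by (simp add: w qtprod_def ins_delta_def mult_2)
  qed
qed

lemma qtprod_assoc: "qtprod (a + b) (qtprod a f g) h = qtprod a f (qtprod b g h)"
proof
  fix w :: "nat list"
  have "take a (take (a + b) w) = take a w" "drop a (take (a + b) w) = take b (drop a w)"
    "drop b (drop a w) = drop (a + b) w"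
    by (simp_all add: min_def drop_take add.commute)
  then show "qtprod (a + b) (qtprod a f g) h w = qtprod a f (qtprod b g h) w"
    unfolding qtprod_def by (simp only: mult.assoc)
qed

lemma qunit_qspace: "qunit \<in> qspace 0"
  by (auto simp: qunit_def qbasis_def qspace_def qwords_0)

lemma qtprod_qunit:
  assumes f: "f \<in> qspace a"
  shows "qtprod a f qunit = f"
proof
  fix w
  show "qtprod a f qunit w = f w"
  proof (cases "length w = a")
    case False
    then have "w \<notin> qwords a" "length w < a \<Longrightarrow> take a w \<notin> qwords a"
      by (auto simp: qwords_def)
    then show ?thesis using f False by (auto simp: qtprod_def qunit_def qbasis_def qspaceD)
  qed (simp add: qtprod_def qunit_def qbasis_def)
qed

lemma qspan_qunit: "qspan {qunit} = qspace 0"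
proof
  show "qspan {qunit} \<subseteq> qspace 0"
    using qunit_qspace by (intro qspan_least lin_closed_qspace) auto
  show "qspace 0 \<subseteq> qspan {qunit}"
  proof
    fix v assume v: "v \<in> qspace 0"
    have "v = (\<lambda>w. \<Sum>u\<in>{qunit}. v [] * u w)"
      using qspaceD[OF v] by (auto simp: fun_eq_iff qunit_def qbasis_def qwords_0)
    then show "v \<in> qspan {qunit}" unfolding qspan_def
      by (intro CollectI exI[of _ "{qunit}"] exI[of _ "\<lambda>_. v []"]) simp
  qed
qed

lemma qtens_least:
  "(\<And>x y. x \<in> A \<Longrightarrow> y \<in> B \<Longrightarrow> qtprod a x y \<in> C) \<Longrightarrow> lin_closed C \<Longrightarrow> qtens a A B \<subseteq> C"
  unfolding qtens_def by (rule qspan_least) auto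

lemma block_sym_in_qtens:
  assumes v: "v \<in> block_sym n (k + 1)" and A: "\<And>j. inner_last n (sym_basis n j) v \<in> A"
  shows "v \<in> qtens (n * k) A (qL n)"
proof -
  have "qtprod (n * k) (inner_last n (sym_basis n j) v) (sym_basis n j) \<in> qtens (n * k) A (qL n)"
    for j
    unfolding qtens_def using A[of j] sym_basis_qL[of n j] by (intro qspan_base) blast
  then have "(\<lambda>w. \<Sum>j\<le>n. qtprod (n * k) (inner_last n (sym_basis n j) v) (sym_basis n j) w)
      \<in> qtens (n * k) A (qL n)"
    unfolding qtens_def by (intro lin_closed_sum1[OF lin_closed_qspan]) auto
  then show ?thesis using block_sym_expand_last[OF v] by simp
qed

lemma qLpow_eq_block_sym: "qLpow n k = block_sym n k"
proof (induction k)
  case 0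
  then show ?case by (simp add: qspan_qunit block_sym_0)
next
  case (Suc k)
  show ?case
  proof
    show "qLpow n (Suc k) \<subseteq> block_sym n (Suc k)"
      using qtprod_block_sym[of _ n k _ 1] Suc.IH
      by (simp add: qL_eq_block_sym qtens_least lin_closed_block_sym)
    show "block_sym n (Suc k) \<subseteq> qLpow n (Suc k)"
      using block_sym_in_qtens[of _ n k] inner_last_block_sym[of _ n k] Suc.IH by auto
  qed
qed

section \<open>The subspaces E_m\<close>

text \<open>\<open>E_M\<close> consists of the block-symmetric vectors annihilated by every contraction of two
  adjacent blocks against \<open>\<delta>\<close>; by adjointness this is the orthogonal complement of the
  subspace spanned by the vectors with a \<open>\<delta>\<close> inserted somewhere.\<close>

definition traceless :: "nat \<Rightarrow> nat \<Rightarrow> tvec set" where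
  "traceless n M = {v \<in> block_sym n M. \<forall>p. p + 2 \<le> M \<longrightarrow> contract n p v = (\<lambda>x. 0)}"

lemma traceless_block_sym: "v \<in> traceless n M \<Longrightarrow> v \<in> block_sym n M"
  by (simp add: traceless_def)

lemma traceless_qspace: "v \<in> traceless n M \<Longrightarrow> v \<in> qspace (n * M)"
  by (simp add: traceless_def block_sym_qspace)

lemma traceless_contract: "v \<in> traceless n M \<Longrightarrow> p + 2 \<le> M \<Longrightarrow> contract n p v = (\<lambda>x. 0)"
  by (simp add: traceless_def)

lemma contract_lincomb:
  "contract n p (\<lambda>w. \<Sum>u\<in>F. c u * u w) = (\<lambda>x. \<Sum>u\<in>F. c u * contract n p u x)"
  unfolding contract_def by (simp add: fun_eq_iff sum_distrib_left ac_simps sum.swap[of _ F])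

lemma lin_closed_contract_zero: "lin_closed {v. \<forall>p. p + 2 \<le> M \<longrightarrow> contract n p v = (\<lambda>x. 0)}"
  unfolding lin_closed_def by (auto simp: contract_lincomb fun_eq_iff subset_iff)

lemma lin_closed_traceless: "lin_closed (traceless n M)"
proof -
  have "traceless n M = block_sym n M \<inter> {v. \<forall>p. p + 2 \<le> M \<longrightarrow> contract n p v = (\<lambda>x. 0)}"
    by (auto simp: traceless_def)
  then show ?thesis using lin_closed_Int[OF lin_closed_block_sym lin_closed_contract_zero] by simp
qed

lemma block_sym_eq_0_if_orth:
  assumes "f \<in> block_sym n (p + r)"
    and "\<And>a y. a \<in> block_sym n p \<Longrightarrow> y \<in> block_sym n r
        \<Longrightarrow> qinner (n * (p + r)) (qtprod (n * p) a y) f = 0"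
  shows "f = (\<lambda>x. 0)"
  using assms
proof (induction r arbitrary: f)
  case 0
  have "qunit \<in> block_sym n 0" using qunit_qspace by (simp add: block_sym_0)
  with "0.prems" have "qinner (n * p) f f = 0"
    using qtprod_qunit[OF block_sym_qspace[OF "0.prems"(1)]] by fastforce
  then show ?case using qinner_self_eq_0 block_sym_qspace[OF "0.prems"(1)] by simp
next
  case (Suc r)
  have f: "f \<in> block_sym n ((p + r) + 1)" using Suc.prems(1) by simp
  have "inner_last n (sym_basis n j) f = (\<lambda>x. 0)" for j
  proof (rule Suc.IH)
    show "inner_last n (sym_basis n j) f \<in> block_sym n (p + r)" using inner_last_block_sym[OF f] .
    fix a y assume a: "a \<in> block_sym n p" and y: "y \<in> block_sym n r"
    have "qtprod (n * r) y (sym_basis n j) \<in> block_sym n (Suc r)"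
      using qtprod_block_sym[OF y, of "sym_basis n j" 1] sym_basis_qL qL_eq_block_sym by simp
    then have orth: "qinner (n * (p + r)
        + n) (qtprod (n * p) a (qtprod (n * r) y (sym_basis n j))) f = 0"
      using Suc.prems(2)[OF a] by (simp add: algebra_simps)
    have "qinner (n * (p + r)) (qtprod (n * p) a y) (inner_last n (sym_basis n j) f)
        = qinner (n * (p + r) + n) (qtprod (n * (p + r)) (qtprod (n * p) a y) (sym_basis n j)) f"
      by (rule qinner_qtprod_inner_last[symmetric])
    also have "\<dots> = 0"
      using qtprod_assoc[of "n * p" "n * r" a y "sym_basis n j"] orth by (simp add: algebra_simps)
    finally show "qinner (n * (p + r)) (qtprod (n * p) a y) (inner_last n (sym_basis n j) f) = 0" .
  qed
  then show ?case using block_sym_expand_last[OF f] by (simp add: qtprod_def)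
qed

lemma qtprod_qspan_orth:
  assumes "\<And>u. u \<in> S \<Longrightarrow> qinner N (qtprod a u y) v = 0" "x \<in> qspan S"
  shows "qinner N (qtprod a x y) v = 0"
proof -
  obtain F c where F: "finite F" "F \<subseteq> S" "x = (\<lambda>w. \<Sum>u\<in>F. c u * u w)"
    using assms(2) by (auto simp: qspan_def)
  have "qtprod a x y = (\<lambda>w. \<Sum>u\<in>F. c u * qtprod a u y w)"
    unfolding F(3) by (rule ext) (simp add: qtprod_def sum_distrib_left sum_distrib_right ac_simps)
  then show ?thesis using assms(1) F(2)
    by (auto simp: qinner_sum_left qinner_scale_left intro!: sum.neutral)
qed

lemma ins_delta_qtprod_in_qDsum:
  assumes a: "a \<in> block_sym n p" and y: "y \<in> block_sym n r"
  shows "ins_delta n p (qtprod (n * p) a y) \<in> qDsum n (p + 2 + r)"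
proof -
  let ?D = "{(\<lambda>w. c * qdelta n w) | c. True}"
  have "qtprod (n * p) a (\<lambda>w. 1 * qdelta n w) \<in> qtens (n * p) (qLpow n p) ?D"
    using a unfolding qtens_def qLpow_eq_block_sym by (intro qspan_base) blast
  then have "qtprod (n * (p + 2)) (qtprod (n * p) a (\<lambda>w. 1 * qdelta n w)) y
      \<in> qtens (n * (Suc p + 1)) (qtens (n * (Suc p - 1)) (qLpow n (Suc p - 1)) ?D) (qLpow n (p + 2
          + r - Suc p - 1))"
    using y unfolding qtens_def[of "n * (Suc p + 1)"] qLpow_eq_block_sym
    by (intro qspan_base) (auto simp: numeral_2_eq_2)
  moreover have "Suc p \<in> {1..p + 2 + r - 1}" by simp
  ultimately have "qtprod (n * (p + 2)) (qtprod (n * p) a (\<lambda>w. 1 * qdelta n w)) y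
      \<in> qDsum n (p + 2 + r)"
    unfolding qDsum_def by (intro qspan_base) blast
  then show ?thesis using qtprod_qdelta_eq_ins_delta[OF block_sym_qspace[OF a], of 1 y] by simp
qed

lemma contract_eq_0_if_orth_qDsum:
  assumes v: "v \<in> block_sym n (p + 2 + r)"
    and orth: "\<And>u. u \<in> qDsum n (p + 2 + r) \<Longrightarrow> qinner (n * (p + 2 + r)) u v = 0"
  shows "contract n p v = (\<lambda>x. 0)"
proof (rule block_sym_eq_0_if_orth)
  show "contract n p v \<in> block_sym n (p + r)" using contract_block_sym[OF v] .
  fix a y assume "a \<in> block_sym n p" "y \<in> block_sym n r"
  then show "qinner (n * (p + r)) (qtprod (n * p) a y) (contract n p v) = 0"
    using orth[OF ins_delta_qtprod_in_qDsum] qinner_ins_delta_left[of n p r "qtprod (n * p) a y" v]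
    by simp
qed

lemma orth_qDsum_if_traceless:
  assumes v: "v \<in> traceless n M" and u: "u \<in> qDsum n M"
  shows "qinner (n * M) u v = 0"
  using u unfolding qDsum_def
proof (rule qspan_orth[rotated])
  fix g assume "g \<in> (\<Union>i\<in>{1..M - 1}.
      qtens (n * (i + 1)) (qtens (n * (i - 1)) (qLpow n (i - 1)) {\<lambda>w. c
          * qdelta n w |c. True}) (qLpow n (M - i - 1)))"
  then obtain i where i: "i \<in> {1..M - 1}"
    and g: "g \<in> qtens (n
        * (i + 1)) (qtens (n * (i - 1)) (qLpow n (i - 1)) {\<lambda>w. c
            * qdelta n w |c. True}) (qLpow n (M - i - 1))"
    by blast
  obtain p where ip: "i = Suc p" using i by (cases i) auto
  define r where "r = M - p - 2"
  have M: "M = p + 2 + r" using i ip by (simp add: r_def)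
  have g: "g \<in> qtens (n
      * (p + 2)) (qtens (n * p) (qLpow n p) {\<lambda>w. c * qdelta n w |c. True}) (qLpow n r)"
    using g ip by (simp add: r_def numeral_2_eq_2)
  show "qinner (n * M) g v = 0"
    using g unfolding qtens_def[of "n * (p + 2)"]
  proof (rule qspan_orth[rotated])
    fix g' assume "g'
        \<in> {qtprod (n * (p + 2)) x y |x y. x
            \<in> qtens (n * p) (qLpow n p) {\<lambda>w. c * qdelta n w |c. True} \<and> y \<in> qLpow n r}"
    then obtain x y where g': "g' = qtprod (n * (p + 2)) x y" and y: "y \<in> block_sym n r"
      and x: "x \<in> qtens (n * p) (qLpow n p) {\<lambda>w. c * qdelta n w |c. True}"
      by (auto simp: qLpow_eq_block_sym)
    show "qinner (n * M) g' v = 0" unfolding g'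
      using x unfolding qtens_def
    proof (rule qtprod_qspan_orth[rotated])
      fix u assume "u \<in> {qtprod (n * p) x y |x y. x \<in> qLpow n p
          \<and> y \<in> {\<lambda>w. c * qdelta n w |c. True}}"
      then obtain a c where u: "u = qtprod (n * p) a (\<lambda>w. c * qdelta n w)"
        and a: "a \<in> block_sym n p"
        by (auto simp: qLpow_eq_block_sym)
      have "qinner (n * M) (qtprod (n * (p + 2)) u y) v
          = cnj c * qinner (n * (p + r)) (qtprod (n * p) a y) (contract n p v)"
        unfolding u qtprod_qdelta_eq_ins_delta[OF block_sym_qspace[OF a]] M qinner_scale_left
        by (simp only: qinner_ins_delta_left)
      then show "qinner (n * M) (qtprod (n * (p + 2)) u y) v = 0"
        using traceless_contract[OF v, of p] M by simp
    qed
  qed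
qed

lemma qE_eq_traceless: "qE n M = traceless n M"
proof (cases "M \<ge> 2")
  case True
  have qE: "qE n M = {v \<in> block_sym n M. \<forall>u\<in>qDsum n M. qinner (n * M) u v = 0}"
    using True by (simp add: qE_def qLpow_eq_block_sym)
  have "contract n p v = (\<lambda>x. 0)" if v: "v \<in> qE n M" and p: "p + 2 \<le> M" for v p
  proof (rule contract_eq_0_if_orth_qDsum)
    have M: "p + 2 + (M - p - 2) = M" using p by simp
    show "v \<in> block_sym n (p + 2 + (M - p - 2))"
      "\<And>u. u \<in> qDsum n (p + 2 + (M - p - 2)) \<Longrightarrow> qinner (n * (p + 2 + (M - p - 2))) u v = 0"
      using v unfolding M by (auto simp: qE)
  qed
  then show ?thesis
    using orth_qDsum_if_traceless by (auto simp: qE traceless_def)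
next
  case False
  then consider "M = 0" | "M = 1" by linarith
  then show ?thesis
    by cases (simp_all add: qE_def traceless_def qspan_qunit block_sym_0 qL_eq_block_sym)
qed

definition traceless_head :: "nat \<Rightarrow> nat \<Rightarrow> tvec set" where
  "traceless_head n m = {v \<in> block_sym n (m + 1). \<forall>p. p + 2 \<le> m \<longrightarrow> contract n p v = (\<lambda>x. 0)}"

lemma lin_closed_traceless_head: "lin_closed (traceless_head n m)"
proof -
  have "traceless_head n m = block_sym n (m + 1) \<inter> {v. \<forall>p. p + 2 \<le> m \<longrightarrow> contract n p v = (\<lambda>x. 0)}"
    by (auto simp: traceless_head_def)
  then show ?thesis using lin_closed_Int[OF lin_closed_block_sym lin_closed_contract_zero] by simp
qed

lemma contract_qtprod_traceless:
  assumes x: "x \<in> traceless n m" and l: "l \<in> block_sym n 1" and p: "p + 2 \<le> m"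
  shows "contract n p (qtprod (n * m) x l) = (\<lambda>y. 0)"
proof -
  define r where "r = m - p - 2"
  have m: "m = p + 2 + r" using p by (simp add: r_def)
  show ?thesis
  proof (rule qspace_eqI[where N="n * (p + r + 1)"])
    have "qtprod (n * m) x l \<in> qspace (n * ((p + r + 1) + 2))"
      using block_sym_qspace[OF qtprod_block_sym[OF traceless_block_sym[OF x] l]] m
      by (simp add: algebra_simps)
    then show "contract n p (qtprod (n * m) x l) \<in> qspace (n * (p + r + 1))"
      by (rule contract_qspace)
    fix y assume "y \<in> qwords (n * (p + r + 1))"
    then obtain A B c where w: "A \<in> qwords (n * p)" "B \<in> qwords (n * r)" "y = A @ B @ c"
      by (metis distrib_left mult_1_right qwords_add3_split)
    then show "contract n p (qtprod (n * m) x l) y = 0"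
      using contract_qtprod[of A n p B r x l c] traceless_contract[OF x p] m
      by (simp add: qwords_length)
  qed simp
qed

lemma inner_last_traceless:
  assumes v: "v \<in> traceless_head n m"
  shows "inner_last n u v \<in> traceless n m"
  unfolding traceless_def
proof (intro CollectI conjI allI impI)
  show "inner_last n u v \<in> block_sym n m"
    using v inner_last_block_sym by (simp add: traceless_head_def)
  fix p assume p: "p + 2 \<le> m"
  define r where "r = m - p - 2"
  have m: "m = p + 2 + r" using p by (simp add: r_def)
  show "contract n p (inner_last n u v) = (\<lambda>x. 0)"
  proof (rule qspace_eqI[where N="n * (p + r)"])
    have "v \<in> qspace (n * (m + 1))"
      using v unfolding traceless_head_def by (blast intro: block_sym_qspace)
    then have "inner_last n u v \<in> qspace (n * ((p + r) + 2))"
      using inner_last_qspace[of v n m u] m by (simp add: algebra_simps)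
    then show "contract n p (inner_last n u v) \<in> qspace (n * (p + r))" by (rule contract_qspace)
    fix x assume "x \<in> qwords (n * (p + r))"
    then have "length (take (n * p) x) = n * p" by (simp add: qwords_length)
    from contract_inner_last[OF this, of u v "drop (n * p) x"]
    show "contract n p (inner_last n u v) x = 0"
      using v p by (simp add: traceless_head_def inner_last_def)
  qed simp
qed

lemma qtens_qE_qL_eq: "qtens (n * m) (qE n m) (qL n) = traceless_head n m"
proof
  show "qtens (n * m) (qE n m) (qL n) \<subseteq> traceless_head n m"
    using qtprod_block_sym[OF traceless_block_sym, of _ n m _ 1] contract_qtprod_traceless
    by (intro qtens_least lin_closed_traceless_head)
      (auto simp: traceless_head_def qE_eq_traceless qL_eq_block_sym)
  show "traceless_head n m \<subseteq> qtens (n * m) (qE n m) (qL n)"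
    using block_sym_in_qtens inner_last_traceless
    by (auto simp: traceless_head_def qE_eq_traceless)
qed

section \<open>The closed form of G_m\<close>

definition G_coeff :: "nat \<Rightarrow> nat \<Rightarrow> complex" where
  "G_coeff n j = (-1) ^ ((n + 1) * j) * of_int (qd n j)"

lemma qG_zero: "qG n m (\<lambda>x. 0) = (\<lambda>w. 0)"
  by (induction m rule: qG.induct) (simp_all add: qmap_tens_id_def qtprod_def)

lemma qG_Suc_Suc:
  "qG n (Suc (Suc k)) v w
      = qG n (Suc k) (\<lambda>x. v (x @ drop (n * (k + 2)) w)) (take (n * (k + 2)) w)
          + G_coeff n (Suc k) * qtprod (n * Suc k) v (qdelta n) w"
  by (simp add: G_coeff_def qmap_tens_id_def)

lemma ins_delta_take:
  assumes "n * j + 2 * n \<le> b"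
  shows "ins_delta n j (\<lambda>x. v (x @ drop b w)) (take b w) = ins_delta n j v w"
proof -
  have "drop (n * j + 2 * n) (take b w) @ drop b w = drop (n * j + 2 * n) w"
    using assms by (metis append_take_drop_id drop_drop drop_take le_add_diff_inverse2)
  then show ?thesis using assms by (simp add: ins_delta_def drop_take min_def)
qed

lemma qG_closed_form_on_length:
  assumes "length w = n * (Suc k + 1)"
  shows "qG n (Suc k) v w = (\<Sum>j<Suc k. G_coeff n j * ins_delta n j v w)"
  using assms
proof (induction k arbitrary: v w)
  case 0
  then show ?case by (simp add: qtprod_def ins_delta_def G_coeff_def mult.commute)
next
  case (Suc k)
  let ?b = "n * (k + 2)"
  have "qG n (Suc k) (\<lambda>x. v (x @ drop ?b w)) (take ?b w)
      = (\<Sum>j<Suc k. G_coeff n j * ins_delta n j (\<lambda>x. v (x @ drop ?b w)) (take ?b w))"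
    using Suc.prems by (intro Suc.IH) (simp add: algebra_simps)
  also have "\<dots> = (\<Sum>j<Suc k. G_coeff n j * ins_delta n j v w)"
  proof (intro sum.cong refl)
    fix j assume "j \<in> {..<Suc k}"
    then have "n * (j + 2) \<le> ?b" by simp
    then show "G_coeff n j * ins_delta n j (\<lambda>x. v (x @ drop ?b w)) (take ?b w)
        = G_coeff n j * ins_delta n j v w"
      by (simp add: ins_delta_take algebra_simps)
  qed
  moreover have "qtprod (n * Suc k) v (qdelta n) w = ins_delta n (Suc k) v w"
    using Suc.prems by (simp add: qtprod_def ins_delta_def algebra_simps)
  ultimately show ?case unfolding qG_Suc_Suc by simp
qed

lemma qG_support:
  assumes "\<And>x. v x \<noteq> 0 \<Longrightarrow> length x = L" and "qG n (Suc k) v w \<noteq> 0"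
  shows "length w = L + 2 * n"
  using assms
proof (induction k arbitrary: v w L)
  case 0
  then have "v [] \<noteq> 0" "qdelta n w \<noteq> 0" by (auto simp: qtprod_def)
  then show ?case using "0.prems"(1) qspaceD[OF qdelta_qspace] qwords_length by fastforce
next
  case (Suc k)
  let ?b = "n * (k + 2)" and ?a = "n * Suc k"
  consider "qG n (Suc k) (\<lambda>x. v (x @ drop ?b w)) (take ?b w) \<noteq> 0"
    | "v (take ?a w) \<noteq> 0" "qdelta n (drop ?a w) \<noteq> 0"
    using Suc.prems(2) unfolding qG_Suc_Suc qtprod_def
      by (metis add_0 mult_zero_left mult_zero_right)
  then show ?case
  proof cases
    case 1
    then obtain x where "v (x @ drop ?b w) \<noteq> 0"
      using qG_zero by fastforce
    then have L: "length (drop ?b w) \<le> L" using Suc.prems(1) by fastforce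
    have "length (take ?b w) = (L - length (drop ?b w)) + 2 * n"
      using Suc.prems(1) by (intro Suc.IH[OF _ 1]) fastforce
    then show ?thesis using L by (metis add.commute add_diff_inverse_nat append_take_drop_id
        length_append not_less add.assoc)
  next
    case 2
    then have "length (take ?a w) = L" "length (drop ?a w) = 2 * n"
      using Suc.prems(1) qspaceD[OF qdelta_qspace] qwords_length by blast+
    then show ?thesis by (metis append_take_drop_id length_append)
  qed
qed

lemma sum_ins_delta_qspace:
  assumes "v \<in> qspace (n * k)"
  shows "(\<lambda>w. \<Sum>j<Suc k. G_coeff n j * ins_delta n j v w) \<in> qspace (n * (Suc k + 1))"
proof (rule lin_closed_sum[OF lin_closed_qspace])
  fix j assume "j \<in> {..<Suc k}"
  then have k: "k = j + (k - j)" by simp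
  have "ins_delta n j v \<in> qspace (n * (j + (k - j) + 2))"
    using ins_delta_qspace[of v n j "k - j"] assms k by simp
  then show "ins_delta n j v \<in> qspace (n * (Suc k + 1))" using k by (simp add: algebra_simps)
qed simp

lemma qG_closed_form:
  assumes v: "v \<in> qspace (n * k)"
  shows "qG n (Suc k) v = (\<lambda>w. \<Sum>j<Suc k. G_coeff n j * ins_delta n j v w)"
proof
  fix w
  show "qG n (Suc k) v w = (\<Sum>j<Suc k. G_coeff n j * ins_delta n j v w)"
  proof (cases "length w = n * (Suc k + 1)")
    case True then show ?thesis by (rule qG_closed_form_on_length)
  next
    case False
    have "\<And>x. v x \<noteq> 0 \<Longrightarrow> length x = n * k"
      using v by (auto simp: qspace_def qwords_def)
    then have "qG n (Suc k) v w = 0"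
      using qG_support[of v "n * k" n k w] False by (auto simp: algebra_simps)
    moreover have "w \<notin> qwords (n * (Suc k + 1))" using False by (auto simp: qwords_def)
    then have "(\<Sum>j<Suc k. G_coeff n j * ins_delta n j v w) = 0"
      using qspaceD[OF sum_ins_delta_qspace[OF v]] by simp
    ultimately show ?thesis by simp
  qed
qed

definition zigzag :: "nat \<Rightarrow> complex" where
  "zigzag n = complex_of_real ((-1)^n / real (n + 1))"

lemma contract_sum: "contract n p (\<lambda>w. \<Sum>j\<in>J. f j w) x = (\<Sum>j\<in>J. contract n p (f j) x)"
  unfolding contract_def by (simp only: sum_distrib_left) (rule sum.swap)

lemma contract_scale: "contract n p (\<lambda>w. c * f w) x = c * contract n p f x"
  unfolding contract_def by (simp add: sum_distrib_left ac_simps)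

lemma ins_delta_zero: "ins_delta n p (\<lambda>x. 0) w = 0"
  by (simp add: ins_delta_def)

lemma contract_ins_delta_far:
  assumes \<eta>: "\<eta> \<in> traceless n k" and j: "j \<le> k" and p: "p \<le> k"
    and far: "p + 2 \<le> j \<or> j + 2 \<le> p" and x: "x \<in> qwords (n * k)"
  shows "contract n p (ins_delta n j \<eta>) x = 0"
  using far
proof
  assume "p + 2 \<le> j"
  define t r where "t = j - p - 2" and "r = k - j"
  have k: "k = p + t + 2 + r" and jj: "j = p + 2 + t"
    using \<open>p + 2 \<le> j\<close> j by (simp_all add: t_def r_def)
  have "contract n p (ins_delta n j \<eta>) x = ins_delta n (p + t) (contract n p \<eta>) x"
    using contract_ins_delta_far_right[of x n p t r \<eta>] x k jj by simp
  also have "contract n p \<eta> = (\<lambda>x. 0)" using traceless_contract[OF \<eta>] k by simp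
  finally show ?thesis by (simp add: ins_delta_zero)
next
  assume "j + 2 \<le> p"
  define t r where "t = p - j - 2" and "r = k - p"
  have k: "k = j + 2 + t + r" and pp: "p = j + 2 + t"
    using \<open>j + 2 \<le> p\<close> p by (simp_all add: t_def r_def)
  have "contract n p (ins_delta n j \<eta>) x = ins_delta n j (contract n (j + t) \<eta>) x"
    using contract_ins_delta_far_left[of x n j t r \<eta>] x k pp by simp
  also have "contract n (j + t) \<eta> = (\<lambda>x. 0)" using traceless_contract[OF \<eta>] k by simp
  finally show ?thesis by (simp add: ins_delta_zero)
qed

lemma contract_ins_delta:
  assumes \<eta>: "\<eta> \<in> traceless n k" and j: "j \<le> k" and p: "p \<le> k" and x: "x \<in> qwords (n * k)"
  shows "contract n p (ins_delta n j \<eta>) x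
      = (if j = p then \<eta> x else if j = p + 1 \<or> j + 1 = p then zigzag n * \<eta> x else 0)"
proof -
  have \<eta>': "\<eta> \<in> block_sym n k" using \<eta> by (rule traceless_block_sym)
  consider "j = p" | "j = p + 1" | "j + 1 = p" | "p + 2 \<le> j \<or> j + 2 \<le> p" by linarith
  then show ?thesis
  proof cases
    case 1
    then show ?thesis using contract_ins_delta_same[of x n p "k - p"] x p by simp
  next
    case 2
    then have "k = p + 1 + (k - p - 1)" using j by simp
    then show ?thesis using 2 contract_ins_delta_next[of \<eta> n p "k - p - 1" x] \<eta>' x
      by (simp add: zigzag_def)
  next
    case 3
    then have "k = j + 1 + (k - j - 1)" using p by simp
    then show ?thesis using 3 contract_ins_delta_prev[of \<eta> n j "k - j - 1" x] \<eta>' x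
      by (simp add: zigzag_def)
  next
    case 4
    then show ?thesis using contract_ins_delta_far[OF \<eta> j p _ x] by auto
  qed
qed

definition contract_G_coeff :: "nat \<Rightarrow> nat \<Rightarrow> nat \<Rightarrow> complex" where
  "contract_G_coeff n k p
      = G_coeff n p + zigzag n
          * ((if p + 1 \<le> k then G_coeff n (p + 1) else 0) + (if p \<ge> 1 then G_coeff n (p-1) else 0))"

lemma sum_neighbours:
  assumes p: "p \<le> k"
  shows "(\<Sum>j<Suc k. g j * (if j = p then a else if j = p + 1 \<or> j + 1 = p then b else 0))
      = g p * a + ((if p + 1 \<le> k then g (p + 1) else 0) + (if p \<ge> 1 then g (p-1) else 0))
          * (b::complex)"
proof -
  have "(\<Sum>j<Suc k. g j * (if j = p then a else if j = p + 1 \<or> j + 1 = p then b else 0))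
      = (\<Sum>j<Suc k. (if j = p then g j * a else 0) + (if j = p + 1 then g j * b else 0)
          + (if j + 1 = p then g j * b else 0))"
    by (rule sum.cong[OF refl]) auto
  also have "\<dots>
      = (\<Sum>j<Suc k. if j = p then g j * a else 0) + (\<Sum>j<Suc k. if j = p + 1 then g j * b else 0)
          + (\<Sum>j<Suc k. if j + 1 = p then g j * b else 0)"
    by (simp add: sum.distrib)
  also have "(\<Sum>j<Suc k. if j = p then g j * a else 0) = g p * a" using p by (simp add: sum.delta')
  also have "(\<Sum>j<Suc k. if j = p + 1 then g j * b else 0)
      = (if p + 1 \<le> k then g (p + 1) * b else 0)"
    by (simp add: sum.delta')
  also have "(\<Sum>j<Suc k. if j + 1 = p then g j * b else 0) = (if p \<ge> 1 then g (p-1) * b else 0)"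
  proof (cases p)
    case 0 then show ?thesis by simp
  next
    case (Suc q)
    have "(\<Sum>j<Suc k. if j + 1 = p then g j * b else 0) = (\<Sum>j<Suc k. if j = q then g j * b else 0)"
      using Suc by (intro sum.cong) auto
    also have "\<dots> = g q * b" using Suc p by (simp add: sum.delta')
    finally show ?thesis using Suc by simp
  qed
  finally show ?thesis by (simp add: distrib_right)
qed

lemma contract_qG:
  assumes eta: "\<eta> \<in> traceless n k" and p: "p \<le> k" and x: "x \<in> qwords (n * k)"
  shows "contract n p (qG n (Suc k) \<eta>) x = contract_G_coeff n k p * \<eta> x"
proof -
  have "contract n p (qG n (Suc k) \<eta>) x
      = (\<Sum>j<Suc k. G_coeff n j * contract n p (ins_delta n j \<eta>) x)"
    unfolding qG_closed_form[OF traceless_qspace[OF eta]] contract_sum by (simp add: contract_scale)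
  also have "\<dots>
      = (\<Sum>j<Suc k. G_coeff n j
          * (if j = p then \<eta> x else if j = p + 1 \<or> j + 1 = p then zigzag n * \<eta> x else 0))"
    by (rule sum.cong[OF refl]) (simp add: contract_ins_delta[OF eta _ p x])
  also have "\<dots> = contract_G_coeff n k p * \<eta> x"
    unfolding sum_neighbours[OF p] contract_G_coeff_def by (simp add: algebra_simps)
  finally show ?thesis .
qed

definition parity_sign :: "nat \<Rightarrow> complex" where "parity_sign n = (-1) ^ (n + 1)"

lemma parity_sign_square: "parity_sign n * parity_sign n = 1"
  by (simp add: parity_sign_def flip: power_add)

lemma G_coeff_parity_sign: "G_coeff n j = parity_sign n ^ j * of_int (qd n j)"
  by (simp only: G_coeff_def parity_sign_def power_mult)

lemma zigzag_parity_sign: "zigzag n = - parity_sign n / of_nat (n + 1)"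
proof -
  have "complex_of_real ((-1)^n / real (n + 1)) = (-1)^n / of_nat (n + 1)"
    by (simp add: of_real_divide)
  moreover have "(-1::complex)^n = - parity_sign n" by (simp add: parity_sign_def)
  ultimately show ?thesis by (simp add: zigzag_def)
qed

lemma contract_G_coeff_eq_0:
  assumes "p + 1 \<le> k"
  shows "contract_G_coeff n k p = 0"
proof -
  let ?e = "parity_sign n" and ?N = "(of_nat (n + 1) :: complex)"
  have e2: "?e * ?e = 1" by (rule parity_sign_square)
  show ?thesis
  proof (cases p)
    case 0
    have "contract_G_coeff n k p = 1 + (- ?e / ?N) * (?e * (of_int (int n + 1)))"
      using 0 assms by (simp add: contract_G_coeff_def G_coeff_parity_sign zigzag_parity_sign)
    also have "\<dots> = 1 - (?e * ?e) * (?N / ?N)" by (simp add: field_simps)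
    also have "\<dots> = 0" using e2 of_nat_neq_0[of n, where 'a=complex] by simp
    finally show ?thesis .
  next
    case (Suc q)
    define d0 d1 d2 where "d0 = (of_int (qd n q) :: complex)"
      "d1 = (of_int (qd n (Suc q)) :: complex)"
      "d2 = (of_int (qd n (Suc (Suc q))) :: complex)"
    have rec: "d2 + d0 = ?N * d1" by (simp add: d0_d1_d2_def algebra_simps)
    have p3: "?e * ?e ^ Suc (Suc q) = ?e ^ Suc q"
    proof -
      have "?e * ?e ^ Suc (Suc q) = (?e * ?e) * ?e ^ Suc q" by (simp add: ac_simps)
      then show ?thesis using e2 by simp
    qed
    have p1: "?e * ?e ^ q = ?e ^ Suc q" by simp
    have "contract_G_coeff n k p
        = ?e ^ Suc q * d1 + (- ?e / ?N) * (?e ^ Suc (Suc q) * d2 + ?e ^ q * d0)"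
      using Suc assms by (simp add: contract_G_coeff_def G_coeff_parity_sign zigzag_parity_sign
        d0_d1_d2_def)
    also have "\<dots> = ?e ^ Suc q * d1 - ((?e * ?e ^ Suc (Suc q)) * d2 + (?e * ?e ^ q) * d0) / ?N"
      by (simp add: field_simps)
    also have "\<dots> = ?e ^ Suc q * (d1 - (d2 + d0) / ?N)"
      unfolding p3 p1 by (simp add: field_simps)
    also have "\<dots> = 0" unfolding rec using of_nat_neq_0[of n, where 'a=complex] by simp
    finally show ?thesis .
  qed
qed

lemma qd_mono: assumes n: "n \<ge> 1" shows "1 \<le> qd n k \<and> qd n k \<le> qd n (Suc k)"
proof (induction k)
  case 0 then show ?case by simp
next
  case (Suc k)
  have a: "1 \<le> qd n (Suc k)" using Suc by linarith
  have "2 * qd n (Suc k) \<le> (int n + 1) * qd n (Suc k)"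
    using n a by (intro mult_right_mono) simp_all
  moreover have "qd n (Suc (Suc k)) = (int n + 1) * qd n (Suc k) - qd n k" by simp
  ultimately have "qd n (Suc k) \<le> qd n (Suc (Suc k))" using Suc by linarith
  then show ?case using a by simp
qed

lemma qd_pos: "n \<ge> 1 \<Longrightarrow> qd n k \<ge> 1"
  using qd_mono by blast

lemma qmu_pos: assumes "n \<ge> 1" shows "qmu n (Suc k) > 0"
proof -
  have "qd n (Suc k) * qd n k > 0" using qd_pos[OF assms, of "Suc k"] qd_pos[OF assms, of k] by simp
  then have a: "real_of_int (qd n (Suc k) * qd n k) > 0" by (simp only: of_int_0_less_iff)
  have b: "real_of_int (qd n 1) > 0" by simp
  have "qmu n (Suc k) = real_of_int (qd n (Suc k) * qd n k) / real_of_int (qd n 1)"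
    by (simp add: qmu_def)
  then show ?thesis using divide_pos_pos[OF a b] by simp
qed

lemma cnj_G_coeff: "cnj (G_coeff n j) = G_coeff n j"
  by (simp add: G_coeff_def)

lemma cnj_zigzag: "cnj (zigzag n) = zigzag n"
  by (simp add: zigzag_def)

lemma cnj_contract_G_coeff: "cnj (contract_G_coeff n k p) = contract_G_coeff n k p"
  by (simp add: contract_G_coeff_def cnj_G_coeff cnj_zigzag)

lemma contract_zero: "contract n p (\<lambda>x. 0) = (\<lambda>x. 0)"
  by (simp add: contract_def)

lemma G_coeff_contract_G_coeff:
  "G_coeff n k * contract_G_coeff n k k = complex_of_real (qmu n (Suc k))"
proof -
  let ?e = "parity_sign n" and ?N = "(of_nat (n + 1) :: complex)"
  have e2: "?e * ?e = 1" by (rule parity_sign_square)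
  have ek2: "?e ^ k * ?e ^ k = 1" using e2 by (simp add: power_mult_distrib[symmetric])
  have mu: "complex_of_real (qmu n (Suc k)) = of_int (qd n (Suc k)) * of_int (qd n k) / ?N"
    by (simp add: qmu_def of_real_divide)
  show ?thesis
  proof (cases k)
    case 0
    have "G_coeff n k * contract_G_coeff n k k = 1"
      using 0 by (simp add: contract_G_coeff_def G_coeff_def)
    moreover have "of_int (qd n (Suc k)) * of_int (qd n k) / ?N = 1"
      using 0 of_nat_neq_0[of n, where 'a=complex] by simp
    ultimately show ?thesis using mu by simp
  next
    case (Suc q)
    define d0 d1 d2 where "d0 = (of_int (qd n q) :: complex)"
      "d1 = (of_int (qd n (Suc q)) :: complex)"
      "d2 = (of_int (qd n (Suc (Suc q))) :: complex)"
    have rec: "d2 = ?N * d1 - d0" by (simp add: d0_d1_d2_def algebra_simps)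
    have eq1: "?e ^ q * ?e * (?e ^ q * ?e) = 1"
      using ek2 e2 by (simp add: ac_simps power_mult_distrib[symmetric])
    have eq2: "?e * (?e ^ q * ?e * ?e ^ q) = ?e ^ q * ?e * (?e ^ q * ?e)" by (simp add: ac_simps)
    have "G_coeff n k * contract_G_coeff n k k
        = (?e ^ Suc q * d1) * (?e ^ Suc q * d1 + (- ?e / ?N) * (?e ^ q * d0))"
      using Suc by (simp add: contract_G_coeff_def G_coeff_parity_sign zigzag_parity_sign
        d0_d1_d2_def)
    also have "\<dots>
        = (?e ^ q * ?e * (?e ^ q * ?e)) * d1 * d1 - (?e * (?e ^ q * ?e * ?e ^ q)) * d1 * d0 / ?N"
      by (simp add: field_simps)
    also have "\<dots> = d1 * d1 - d1 * d0 / ?N" unfolding eq2 eq1 by simp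
    also have "\<dots> = d2 * d1 / ?N" unfolding rec
      using of_nat_neq_0[of n, where 'a=complex] by (simp add: field_simps)
    finally show ?thesis using mu Suc by (simp add: d0_d1_d2_def)
  qed
qed

lemma qinner_qG_ins_delta:
  assumes \<eta>: "\<eta> \<in> traceless n k" and j: "j \<le> k"
  shows "qinner (n * (Suc k + 1)) (qG n (Suc k) \<eta>) (ins_delta n j \<eta>')
      = (if j = k then contract_G_coeff n k k * qinner (n * k) \<eta> \<eta>' else 0)"
proof -
  define r where "r = k - j"
  have k: "k = j + r" using j by (simp add: r_def)
  have "qinner (n * (Suc k + 1)) (qG n (Suc k) \<eta>) (ins_delta n j \<eta>')
      = qinner (n * (j + 2 + r)) (qG n (Suc k) \<eta>) (ins_delta n j \<eta>')"
    using k by (simp add: algebra_simps)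
  also have "\<dots> = qinner (n * (j + r)) (contract n j (qG n (Suc k) \<eta>)) \<eta>'"
    by (rule qinner_ins_delta_right)
  also have "\<dots> = qinner (n * k) (contract n j (qG n (Suc k) \<eta>)) \<eta>'"
    using k by simp
  also have "\<dots> = qinner (n * k) (\<lambda>x. contract_G_coeff n k j * \<eta> x) \<eta>'"
    by (intro qinner_cong) (simp_all add: contract_qG[OF \<eta> j])
  also have "\<dots> = (if j = k then contract_G_coeff n k k * qinner (n * k) \<eta> \<eta>' else 0)"
    using j contract_G_coeff_eq_0[of j k n] by (auto simp: qinner_scale_left cnj_contract_G_coeff)
  finally show ?thesis .
qed

lemma qinner_qG_qG:
  assumes \<eta>: "\<eta> \<in> traceless n k" and \<eta>': "\<eta>' \<in> traceless n k"
  shows "qinner (n * (Suc k + 1)) (qG n (Suc k) \<eta>) (qG n (Suc k) \<eta>')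
      = complex_of_real (qmu n (Suc k)) * qinner (n * k) \<eta> \<eta>'"
proof -
  have "qinner (n * (Suc k + 1)) (qG n (Suc k) \<eta>) (qG n (Suc k) \<eta>')
      = (\<Sum>j<Suc k. G_coeff n j * qinner (n * (Suc k + 1)) (qG n (Suc k) \<eta>) (ins_delta n j \<eta>'))"
    unfolding qG_closed_form[OF traceless_qspace[OF \<eta>']] qinner_sum_right qinner_scale_right ..
  also have "\<dots>
      = (\<Sum>j<Suc k. if j
          = k then G_coeff n k * (contract_G_coeff n k k * qinner (n * k) \<eta> \<eta>') else 0)"
  proof (rule sum.cong[OF refl])
    fix j assume "j \<in> {..<Suc k}"
    then have "j \<le> k" by simp
    then show "G_coeff n j * qinner (n * (Suc k + 1)) (qG n (Suc k) \<eta>) (ins_delta n j \<eta>')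
        = (if j = k then G_coeff n k * (contract_G_coeff n k k * qinner (n * k) \<eta> \<eta>') else 0)"
      unfolding qinner_qG_ins_delta[OF \<eta> \<open>j \<le> k\<close>] by simp
  qed
  also have "\<dots> = complex_of_real (qmu n (Suc k)) * qinner (n * k) \<eta> \<eta>'"
    by (simp add: G_coeff_contract_G_coeff flip: mult.assoc)
  finally show ?thesis .
qed

lemma qG_traceless_head:
  assumes eta: "\<eta> \<in> traceless n k"
  shows "qG n (Suc k) \<eta> \<in> traceless_head n (Suc k)"
proof -
  have eB: "\<eta> \<in> block_sym n k" using eta by (rule traceless_block_sym)
  have eS: "\<eta> \<in> qspace (n * k)" using block_sym_qspace[OF eB] .
  have GB: "qG n (Suc k) \<eta> \<in> block_sym n (Suc k + 1)"
    unfolding qG_closed_form[OF eS]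
  proof (rule lin_closed_sum[OF lin_closed_block_sym])
    fix j assume j: "j \<in> {..<Suc k}"
    define r where "r = k - j"
    have k: "k = j + r" using j by (simp add: r_def)
    have "ins_delta n j \<eta> \<in> block_sym n (j + 2 + r)"
      using ins_delta_block_sym[of \<eta> n j r] eB k by simp
    then show "ins_delta n j \<eta> \<in> block_sym n (Suc k + 1)" using k by (simp add: algebra_simps)
  qed simp
  show ?thesis unfolding traceless_head_def
  proof (intro CollectI conjI allI impI)
    show "qG n (Suc k) \<eta> \<in> block_sym n (Suc k + 1)" by (rule GB)
    fix p assume p: "p + 2 \<le> Suc k"
    show "contract n p (qG n (Suc k) \<eta>) = (\<lambda>x. 0)"
    proof (rule qspace_eqI[where N="n * k"])
      have "qG n (Suc k) \<eta> \<in> qspace (n * (k + 2))"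
        using block_sym_qspace[OF GB] by (simp add: algebra_simps)
      then show "contract n p (qG n (Suc k) \<eta>) \<in> qspace (n * k)" by (rule contract_qspace)
      show "(\<lambda>x. 0) \<in> qspace (n * k)" by (simp add: qspace_def)
      fix x assume x: "x \<in> qwords (n * k)"
      show "contract n p (qG n (Suc k) \<eta>) x = 0"
        using contract_qG[OF eta _ x, of p] contract_G_coeff_eq_0[of p k n] p by simp
    qed
  qed
qed

lemma qinner_qG_left:
  assumes eS: "\<eta> \<in> qspace (n * k)" and y: "y \<in> traceless_head n (Suc k)"
  shows "qinner (n * (Suc k + 1)) (qG n (Suc k) \<eta>) y
      = G_coeff n k * qinner (n * k) \<eta> (contract n k y)"
proof -
  have yP: "\<And>p. p + 2 \<le> Suc k \<Longrightarrow> contract n p y = (\<lambda>x. 0)" using y by (simp add: traceless_head_def)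
  have summand: "cnj (G_coeff n j) * qinner (n * (Suc k + 1)) (ins_delta n j \<eta>) y
      = (if j = k then G_coeff n k * qinner (n * k) \<eta> (contract n k y) else 0)"
    if j: "j < Suc k" for j
  proof -
    define r where "r = k - j"
    have k: "k = j + r" using j by (simp add: r_def)
    have "qinner (n * (Suc k + 1)) (ins_delta n j \<eta>) y
        = qinner (n * (j + 2 + r)) (ins_delta n j \<eta>) y"
      using k by (simp add: algebra_simps)
    also have "\<dots> = qinner (n * (j + r)) \<eta> (contract n j y)" by (rule qinner_ins_delta_left)
    finally have e: "qinner (n * (Suc k + 1)) (ins_delta n j \<eta>) y
        = qinner (n * k) \<eta> (contract n j y)"
      using k by simp
    show ?thesis
    proof (cases "j = k")
      case True then show ?thesis using e by (simp add: cnj_G_coeff)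
    next
      case False
      then have "j + 2 \<le> Suc k" using j by simp
      then show ?thesis using e False yP by simp
    qed
  qed
  have "qinner (n * (Suc k + 1)) (qG n (Suc k) \<eta>) y
      = (\<Sum>j<Suc k. cnj (G_coeff n j) * qinner (n * (Suc k + 1)) (ins_delta n j \<eta>) y)"
    unfolding qG_closed_form[OF eS] qinner_sum_left qinner_scale_left ..
  also have "\<dots> = (\<Sum>j<Suc k. if j = k then G_coeff n k * qinner (n * k) \<eta> (contract n k y) else 0)"
    by (rule sum.cong[OF refl], rule summand) simp
  also have "\<dots> = G_coeff n k * qinner (n * k) \<eta> (contract n k y)" by (simp add: sum.delta')
  finally show ?thesis .
qed

lemma contract_last_traceless:
  assumes y: "y \<in> traceless_head n (Suc k)"
  shows "contract n k y \<in> traceless n k"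
proof -
  have yB: "y \<in> block_sym n (k + 2 + 0)" using y by (simp add: traceless_head_def)
  have yP: "\<And>p. p + 2 \<le> Suc k \<Longrightarrow> contract n p y = (\<lambda>x. 0)" using y by (simp add: traceless_head_def)
  have PB: "contract n k y \<in> block_sym n k" using contract_block_sym[OF yB] by simp
  show ?thesis unfolding traceless_def
  proof (intro CollectI conjI allI impI)
    show "contract n k y \<in> block_sym n k" by (rule PB)
    fix p assume p: "p + 2 \<le> k"
    define t where "t = k - p - 2"
    have k: "k = p + 2 + t" using p by (simp add: t_def)
    show "contract n p (contract n k y) = (\<lambda>x. 0)"
    proof (rule qspace_eqI[where N="n * (p + t)"])
      have "contract n k y \<in> qspace (n * ((p + t) + 2))"
        using block_sym_qspace[OF PB] k by (simp add: algebra_simps)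
      then show "contract n p (contract n k y) \<in> qspace (n * (p + t))" by (rule contract_qspace)
      show "(\<lambda>x. 0) \<in> qspace (n * (p + t))" by (simp add: qspace_def)
      fix x assume x: "x \<in> qwords (n * (p + t))"
      have lA: "length (take (n * p) x) = n * p" and lY: "length (drop (n * p) x) = n * t"
        using x by (simp_all add: qwords_length algebra_simps)
      have "contract n p (contract n (p + 2 + t) y) (take (n * p) x @ drop (n * p) x @ [])
          = contract n (p + t) (contract n p y) (take (n * p) x @ drop (n * p) x @ [])"
        by (rule contract_contract[OF lA lY])
      then show "contract n p (contract n k y) x = 0" using yP[of p] p k contract_zero by simp
    qed
  qed
qed

lemma traceless_traceless_head: "\<xi> \<in> traceless n (Suc (Suc k)) \<Longrightarrow> \<xi> \<in> traceless_head n (Suc k)"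
  by (simp add: traceless_def traceless_head_def)

lemma qinner_traceless_qG:
  assumes xi: "\<xi> \<in> traceless n (Suc (Suc k))" and eS: "\<eta> \<in> qspace (n * k)"
  shows "qinner (n * (Suc k + 1)) \<xi> (qG n (Suc k) \<eta>) = 0"
proof -
  have summand: "G_coeff n j * qinner (n * (Suc k + 1)) \<xi> (ins_delta n j \<eta>) = 0" if j: "j < Suc k" for j
  proof -
    define r where "r = k - j"
    have k: "k = j + r" using j by (simp add: r_def)
    have "qinner (n * (Suc k + 1)) \<xi> (ins_delta n j \<eta>)
        = qinner (n * (j + 2 + r)) \<xi> (ins_delta n j \<eta>)"
      using k by (simp add: algebra_simps)
    also have "\<dots> = qinner (n * (j + r)) (contract n j \<xi>) \<eta>" by (rule qinner_ins_delta_right)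
    also have "contract n j \<xi> = (\<lambda>x. 0)" using traceless_contract[OF xi] j by simp
    finally show ?thesis by simp
  qed
  show ?thesis
    unfolding qG_closed_form[OF eS] qinner_sum_right qinner_scale_right
    by (rule sum.neutral, rule ballI, rule summand) simp
qed

section \<open>The isometry V_m\<close>

definition V_coeff :: "nat \<Rightarrow> nat \<Rightarrow> complex" where
  "V_coeff n k = (-1) ^ ((n + 1) * k) * complex_of_real (1 / sqrt (qmu n (Suc k)))"

lemma qV_eq_V_coeff: "qV n (Suc k) \<eta> = (\<lambda>w. V_coeff n k * qG n (Suc k) \<eta> w)"
  by (simp add: qV_def V_coeff_def)

lemma cnj_V_coeff: "cnj (V_coeff n k) = V_coeff n k"
  by (simp add: V_coeff_def)

lemma V_coeff_square:
  assumes n: "n \<ge> 1"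
  shows "V_coeff n k * V_coeff n k * complex_of_real (qmu n (Suc k)) = 1"
proof -
  have mu: "qmu n (Suc k) > 0" using qmu_pos[OF n] .
  have s: "((-1::complex) ^ ((n + 1) * k)) * ((-1) ^ ((n + 1) * k)) = 1"
    by (simp flip: power_add)
  have r: "(1 / sqrt (qmu n (Suc k))) * (1 / sqrt (qmu n (Suc k))) * qmu n (Suc k) = 1"
    using mu by (simp add: real_sqrt_mult_self field_simps)
  have "V_coeff n k * V_coeff n k * complex_of_real (qmu n (Suc k))
      = ((-1::complex) ^ ((n + 1) * k) * (-1) ^ ((n + 1) * k))
          * complex_of_real ((1 / sqrt (qmu n (Suc k))) * (1 / sqrt (qmu n (Suc k)))
              * qmu n (Suc k))"
    unfolding V_coeff_def of_real_mult by (simp only: mult_ac)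
  also have "\<dots> = 1" by (simp only: s r of_real_1 mult_1)
  finally show ?thesis .
qed

lemma V_coeff_neq_0: assumes "n \<ge> 1" shows "V_coeff n k \<noteq> 0"
  using V_coeff_square[OF assms, of k] by auto

lemma qinner_qV_qV:
  assumes n: "n \<ge> 1" and eta: "\<eta> \<in> traceless n k" and eta': "\<eta>' \<in> traceless n k"
  shows "qinner (n * (Suc k + 1)) (qV n (Suc k) \<eta>) (qV n (Suc k) \<eta>') = qinner (n * k) \<eta> \<eta>'"
proof -
  have "qinner (n * (Suc k + 1)) (qV n (Suc k) \<eta>) (qV n (Suc k) \<eta>')
      = cnj (V_coeff n k) * V_coeff n k
          * qinner (n * (Suc k + 1)) (qG n (Suc k) \<eta>) (qG n (Suc k) \<eta>')"
    unfolding qV_eq_V_coeff qinner_scale_left qinner_scale_right by simp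
  also have "\<dots>
      = (V_coeff n k * V_coeff n k * complex_of_real (qmu n (Suc k))) * qinner (n * k) \<eta> \<eta>'"
    using qinner_qG_qG[OF eta eta'] cnj_V_coeff by (simp add: ac_simps)
  also have "\<dots> = qinner (n * k) \<eta> \<eta>'" using V_coeff_square[OF n] by simp
  finally show ?thesis .
qed

lemma qV_traceless_head:
  assumes eta: "\<eta> \<in> traceless n k"
  shows "qV n (Suc k) \<eta> \<in> traceless_head n (Suc k)"
  unfolding qV_eq_V_coeff
    by (rule lin_closed_scale[OF lin_closed_traceless_head qG_traceless_head[OF eta]])

lemma qinner_qV_left:
  assumes eS: "\<eta> \<in> qspace (n * k)" and y: "y \<in> traceless_head n (Suc k)"
  shows "qinner (n * (Suc k + 1)) (qV n (Suc k) \<eta>) y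
      = qinner (n * k) \<eta> (\<lambda>x. (V_coeff n k * G_coeff n k) * contract n k y x)"
  unfolding qV_eq_V_coeff qinner_scale_left qinner_scale_right qinner_qG_left[OF eS y]
  by (simp add: cnj_V_coeff)

lemma qinner_traceless_qV:
  assumes xi: "\<xi> \<in> traceless n (Suc (Suc k))" and eS: "\<eta> \<in> qspace (n * k)"
  shows "qinner (n * (Suc k + 1)) \<xi> (qV n (Suc k) \<eta>) = 0"
  unfolding qV_eq_V_coeff qinner_scale_right qinner_traceless_qG[OF xi eS] by simp

lemma ins_delta_diff: "ins_delta n j (\<lambda>x. a x - b x) w = ins_delta n j a w - ins_delta n j b w"
  by (simp add: ins_delta_def algebra_simps)

lemma qV_diff:
  assumes a: "a \<in> qspace (n * k)" and b: "b \<in> qspace (n * k)"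
  shows "qV n (Suc k) (\<lambda>x. a x - b x) = (\<lambda>w. qV n (Suc k) a w - qV n (Suc k) b w)"
proof -
  have d: "(\<lambda>x. a x - b x) \<in> qspace (n * k)" by (rule lin_closed_diff[OF lin_closed_qspace a b])
  show ?thesis
    unfolding qV_eq_V_coeff qG_closed_form[OF d] qG_closed_form[OF a] qG_closed_form[OF b]
      ins_delta_diff
    by (simp add: algebra_simps sum_subtractf)
qed

lemma qinner_self_add_eq_0:
  assumes u: "u \<in> qspace N" and v: "v \<in> qspace M" and "qinner N u u + qinner M v v = 0"
  shows "u = (\<lambda>w. 0)" "v = (\<lambda>w. 0)"
proof -
  have "(\<Sum>w\<in>qwords N. (cmod (u w))\<^sup>2) + (\<Sum>w\<in>qwords M. (cmod (v w))\<^sup>2) = 0"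
    using assms(3) unfolding qinner_self by (simp only: of_real_add[symmetric] of_real_eq_0_iff)
  then have "qinner N u u = 0" "qinner M v v = 0"
    by (simp_all add: qinner_self add_nonneg_eq_0_iff sum_nonneg)
  then show "u = (\<lambda>w. 0)" "v = (\<lambda>w. 0)" using qinner_self_eq_0 u v by blast+
qed

lemma qinner_qPhi_qPhi:
  assumes n: "n \<ge> 1" and \<xi>: "\<xi> \<in> traceless n (Suc (Suc k))" and \<xi>': "\<xi>' \<in> traceless n (Suc (Suc k))"
    and \<eta>: "\<eta> \<in> traceless n k" and \<eta>': "\<eta>' \<in> traceless n k"
  shows "qinner (n * (Suc k + 1)) (qPhi n (Suc k) (\<xi>, \<eta>)) (qPhi n (Suc k) (\<xi>', \<eta>'))
      = qinner (n * (Suc k + 1)) \<xi> \<xi>' + qinner (n * k) \<eta> \<eta>'"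
proof -
  have "qinner (n * (Suc k + 1)) (qV n (Suc k) \<eta>) \<xi>' = 0"
    using qinner_traceless_qV[OF \<xi>' traceless_qspace[OF \<eta>]] qinner_cnj[of _ \<xi>']
    by (metis complex_cnj_zero)
  then show ?thesis
    unfolding qPhi_def fst_conv snd_conv qinner_add_left qinner_add_right
    using qinner_traceless_qV[OF \<xi> traceless_qspace[OF \<eta>']] qinner_qV_qV[OF n \<eta> \<eta>'] by simp
qed

lemma inj_on_qPhi:
  assumes n: "n \<ge> 1"
  shows "inj_on (qPhi n (Suc k)) (traceless n (Suc (Suc k)) \<times> traceless n k)"
proof (rule inj_onI, clarify)
  fix \<xi> \<eta> \<xi>' \<eta>'
  assume \<xi>: "\<xi> \<in> traceless n (Suc (Suc k))" "\<xi>' \<in> traceless n (Suc (Suc k))"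
    and \<eta>: "\<eta> \<in> traceless n k" "\<eta>' \<in> traceless n k"
    and eq: "qPhi n (Suc k) (\<xi>, \<eta>) = qPhi n (Suc k) (\<xi>', \<eta>')"
  define d\<xi> where "d\<xi> = (\<lambda>w. \<xi> w - \<xi>' w)"
  define d\<eta> where "d\<eta> = (\<lambda>w. \<eta> w - \<eta>' w)"
  have d\<xi>: "d\<xi> \<in> traceless n (Suc (Suc k))" and d\<eta>: "d\<eta> \<in> traceless n k"
    unfolding d\<xi>_def d\<eta>_def using \<xi> \<eta> by (simp_all add: lin_closed_diff[OF lin_closed_traceless])
  have "qPhi n (Suc k) (d\<xi>, d\<eta>) = (\<lambda>w. qPhi n (Suc k) (\<xi>, \<eta>) w - qPhi n (Suc k) (\<xi>', \<eta>') w)"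
    unfolding qPhi_def d\<xi>_def d\<eta>_def fst_conv snd_conv
      qV_diff[OF traceless_qspace[OF \<eta>(1)] traceless_qspace[OF \<eta>(2)]]
    by (simp add: algebra_simps)
  then have "qinner (n * (Suc k + 1)) d\<xi> d\<xi> + qinner (n * k) d\<eta> d\<eta> = 0"
    using qinner_qPhi_qPhi[OF n d\<xi> d\<xi> d\<eta> d\<eta>] eq by simp
  then have "d\<xi> = (\<lambda>w. 0)" "d\<eta> = (\<lambda>w. 0)"
    using qinner_self_add_eq_0[OF traceless_qspace[OF d\<xi>] traceless_qspace[OF d\<eta>]] by simp_all
  then show "\<xi> = \<xi>' \<and> \<eta> = \<eta>'" by (simp add: d\<xi>_def d\<eta>_def fun_eq_iff)
qed

text \<open>Surjectivity: subtracting from \<open>y \<in> E_m \<otimes> E_1\<close> its component \<open>V_m V_m\<^sup>* y\<close> in the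
  range of \<open>V_m\<close> leaves a vector that is also annihilated by the last contraction, i.e. a
  vector of \<open>E_{m+1}\<close>.\<close>

lemma traceless_head_minus_qV:
  assumes n: "n \<ge> 1" and y: "y \<in> traceless_head n (Suc k)"
  defines "\<eta>\<^sub>0 \<equiv> (\<lambda>x. V_coeff n k * G_coeff n k * contract n k y x)"
  shows "\<eta>\<^sub>0 \<in> traceless n k" "(\<lambda>w. y w - qV n (Suc k) \<eta>\<^sub>0 w) \<in> traceless n (Suc (Suc k))"
proof -
  let ?c = "V_coeff n k * G_coeff n k" and ?y' = "\<lambda>w. y w - qV n (Suc k) \<eta>\<^sub>0 w"
  show \<eta>\<^sub>0: "\<eta>\<^sub>0 \<in> traceless n k"
    unfolding \<eta>\<^sub>0_def
      by (rule lin_closed_scale[OF lin_closed_traceless contract_last_traceless[OF y]])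
  have y': "?y' \<in> traceless_head n (Suc k)"
    by (rule lin_closed_diff[OF lin_closed_traceless_head y qV_traceless_head[OF \<eta>\<^sub>0]])
  have orth: "qinner (n * k) \<eta> (\<lambda>x. ?c * contract n k ?y' x) = 0" if \<eta>: "\<eta> \<in> traceless n k" for \<eta>
  proof -
    have "qinner (n * k) \<eta> (\<lambda>x. ?c * contract n k ?y' x)
        = qinner (n * (Suc k + 1)) (qV n (Suc k) \<eta>) ?y'"
      using qinner_qV_left[OF traceless_qspace[OF \<eta>] y'] by simp
    also have "\<dots> = 0"
      unfolding qinner_diff_right
      using qinner_qV_left[OF traceless_qspace[OF \<eta>] y] qinner_qV_qV[OF n \<eta> \<eta>\<^sub>0]
        by (simp add: \<eta>\<^sub>0_def)
    finally show ?thesis .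
  qed
  have c: "?c \<noteq> 0"
    using V_coeff_neq_0[OF n] qd_pos[OF n, of k] by (simp add: G_coeff_def)
  have "contract n k ?y' \<in> traceless n k" using contract_last_traceless[OF y'] .
  then have "qinner (n * k) (contract n k ?y') (contract n k ?y') = 0"
    using orth c by (simp add: qinner_scale_right)
  then have last: "contract n k ?y' = (\<lambda>x. 0)"
    using qinner_self_eq_0 traceless_qspace[OF contract_last_traceless[OF y']] by blast
  show "?y' \<in> traceless n (Suc (Suc k))"
    using y' last by (auto simp: traceless_def traceless_head_def less_Suc_eq_le le_Suc_eq)
qed

lemma qPhi_image:
  assumes n: "n \<ge> 1"
  shows "qPhi n (Suc k) ` (traceless n (Suc (Suc k)) \<times> traceless n k) = traceless_head n (Suc k)"
proof
  show "qPhi n (Suc k) ` (traceless n (Suc (Suc k)) \<times> traceless n k) \<subseteq> traceless_head n (Suc k)"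
    using lin_closed_add[OF lin_closed_traceless_head traceless_traceless_head qV_traceless_head]
    by (auto simp: qPhi_def)
  show "traceless_head n (Suc k) \<subseteq> qPhi n (Suc k) ` (traceless n (Suc (Suc k)) \<times> traceless n k)"
  proof
    fix y assume y: "y \<in> traceless_head n (Suc k)"
    let ?\<eta> = "\<lambda>x. V_coeff n k * G_coeff n k * contract n k y x"
    have "y = qPhi n (Suc k) (\<lambda>w. y w - qV n (Suc k) ?\<eta> w, ?\<eta>)"
      by (simp add: qPhi_def)
    then show "y \<in> qPhi n (Suc k) ` (traceless n (Suc (Suc k)) \<times> traceless n k)"
      using traceless_head_minus_qV[OF n y] by blast
  qed
qed

lemma bij_betw_qPhi:
  "n \<ge> 1 \<Longrightarrow> bij_betw (qPhi n (Suc k)) (traceless n (Suc (Suc k))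
      \<times> traceless n k) (traceless_head n (Suc k))"
  by (simp add: bij_betw_def inj_on_qPhi qPhi_image)

section \<open>SU(2)-equivariance\<close>

definition word_coeff :: "(nat \<Rightarrow> nat \<Rightarrow> complex) \<Rightarrow> nat list \<Rightarrow> nat list \<Rightarrow> complex" where
  "word_coeff g w u = (\<Prod>i<length w. g (w ! i) (u ! i))"

lemma word_coeff_Nil[simp]: "word_coeff g [] u = 1" by (simp add: word_coeff_def)

lemma word_coeff_Cons: "word_coeff g (x # w) (y # u) = g x y * word_coeff g w u"
  unfolding word_coeff_def length_Cons prod.lessThan_Suc_shift by simp

lemma word_coeff_append: "length a = length a'
    \<Longrightarrow> word_coeff g (a @ b) (a' @ b') = word_coeff g a a' * word_coeff g b b'"
proof (induction a arbitrary: a')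
  case Nil then show ?case by simp
next
  case (Cons x as)
  then obtain y as' where a': "a' = y # as'" "length as = length as'" by (cases a') auto
  then show ?case using Cons.IH[of as'] by (simp add: word_coeff_Cons)
qed

lemma qact_qwords: "w \<in> qwords N \<Longrightarrow> qact N g v w = (\<Sum>u\<in>qwords N. word_coeff g w u * v u)"
  by (simp add: qact_def word_coeff_def qwords_length)

lemma qact_qspace: "qact N g v \<in> qspace N"
  by (simp add: qact_def qspace_def)

lemma qact_append:
  assumes x: "x \<in> qwords a" and y: "y \<in> qwords b"
  shows "qact (a + b) g v (x @ y)
      = (\<Sum>x'\<in>qwords a. \<Sum>y'\<in>qwords b. word_coeff g x x' * word_coeff g y y' * v (x' @ y'))"
proof -
  have "x @ y \<in> qwords (a + b)" using x y by (rule qwords_appendI)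
  then have "qact (a + b) g v (x @ y) = (\<Sum>u\<in>qwords (a + b). word_coeff g (x @ y) u * v u)"
    by (rule qact_qwords)
  also have "\<dots> = (\<Sum>x'\<in>qwords a. \<Sum>y'\<in>qwords b. word_coeff g (x @ y) (x' @ y') * v (x' @ y'))"
    by (rule sum_qwords_add)
  also have "\<dots> = (\<Sum>x'\<in>qwords a. \<Sum>y'\<in>qwords b. word_coeff g x x' * word_coeff g y y' * v (x' @ y'))"
    using x by (intro sum.cong[OF refl]) (simp add: word_coeff_append qwords_length)
  finally show ?thesis .
qed

lemma qact_add: "qact N g (\<lambda>w. u w + v w) = (\<lambda>w. qact N g u w + qact N g v w)"
  by (rule ext) (simp add: qact_def distrib_left sum.distrib)

lemma qact_scale: "qact N g (\<lambda>w. c * u w) = (\<lambda>w. c * qact N g u w)"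
  by (rule ext) (simp add: qact_def sum_distrib_left ac_simps)

lemma qact_sum: "qact N g (\<lambda>w. \<Sum>j\<in>J. f j w) = (\<lambda>w. \<Sum>j\<in>J. qact N g (f j) w)"
proof (rule ext)
  fix w
  show "qact N g (\<lambda>w. \<Sum>j\<in>J. f j w) w = (\<Sum>j\<in>J. qact N g (f j) w)"
  proof (cases "w \<in> qwords N")
    case True
    then show ?thesis unfolding qact_def by (simp add: sum_distrib_left) (rule sum.swap)
  next
    case False then show ?thesis by (simp add: qact_def)
  qed
qed

definition levi_civita :: "nat \<Rightarrow> nat \<Rightarrow> complex" where
  "levi_civita a b = (if a = 0 \<and> b = 1 then 1 else if a = 1 \<and> b = 0 then -1 else 0)"

text \<open>\<open>omega n\<close> is \<open>\<epsilon>^{\<otimes>n}\<close>, pairing the \<open>i\<close>-th letters of the two blocks; it is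
  invariant because \<open>det g = 1\<close>, and symmetrising its first block gives a multiple of \<open>\<delta>\<close>.\<close>

definition omega :: "nat \<Rightarrow> tvec" where
  "omega n w = (if w \<in> qwords (2 * n) then (\<Prod>i<n. levi_civita (w ! i) (w ! (n + i))) else 0)"

lemma omega_qspace: "omega n \<in> qspace (2 * n)"
  by (simp add: omega_def qspace_def)

lemma omega_append:
  assumes "a \<in> qwords n" "b \<in> qwords n"
  shows "omega n (a @ b) = (\<Prod>i<n. levi_civita (a ! i) (b ! i))"
proof -
  have "a @ b \<in> qwords (2 * n)" using qwords_appendI[OF assms] by (simp add: mult_2)
  moreover have "length a = n" using assms by (simp add: qwords_length)
  ultimately show ?thesis by (simp add: omega_def nth_append)
qed

lemma prod_nth_Cons_Cons: "(\<Prod>i<Suc n. h i ((s # u) ! i) ((t # v) ! i))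
    = h 0 s t * (\<Prod>i<n. h (Suc i) (u ! i) (v ! i))"
  by (simp only: prod.lessThan_Suc_shift) simp

lemma sum_sum_prod_nth:
  "(\<Sum>a\<in>qwords n. \<Sum>b\<in>qwords n. \<Prod>i<n. h i (a ! i) (b ! i))
      = (\<Prod>i<n. \<Sum>s\<in>{0::nat,1}. \<Sum>t\<in>{0::nat,1}. (h i s t :: complex))"
proof (induction n arbitrary: h)
  case 0 then show ?case by (simp add: qwords_0)
next
  case (Suc n)
  have "(\<Sum>a\<in>qwords (Suc n). \<Sum>b\<in>qwords (Suc n). \<Prod>i<Suc n. h i (a ! i) (b ! i))
      = (\<Sum>s\<in>{0,1}. \<Sum>u\<in>qwords n. \<Sum>t\<in>{0,1}. \<Sum>v\<in>qwords n. h 0 s t * (\<Prod>i<n. h (Suc i) (u ! i) (v ! i)))"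
    by (simp only: sum_qwords_Suc prod_nth_Cons_Cons)
  also have "\<dots>
      = (\<Sum>s\<in>{0,1}. \<Sum>t\<in>{0,1}. h 0 s t * (\<Sum>u\<in>qwords n. \<Sum>v\<in>qwords n. \<Prod>i<n. h (Suc i) (u ! i) (v ! i)))"
    by (rule sum.cong[OF refl], subst sum.swap, simp add: sum_distrib_left)
  also have "\<dots>
      = (\<Sum>s\<in>{0,1}. \<Sum>t\<in>{0,1}. h 0 s t) * (\<Prod>i<n. \<Sum>s\<in>{0::nat,1}. \<Sum>t\<in>{0::nat,1}. h (Suc i) s t)"
    unfolding Suc.IH[of "\<lambda>i. h (Suc i)"] by (simp add: sum_distrib_right distrib_right)
  also have "\<dots> = (\<Prod>i<Suc n. \<Sum>s\<in>{0::nat,1}. \<Sum>t\<in>{0::nat,1}. h i s t)"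
    by (simp only: prod.lessThan_Suc_shift)
  finally show ?case .
qed

lemma levi_civita_det:
  assumes g: "g \<in> SU2" and a: "a \<in> {0,1}" and b: "b \<in> {0,1}"
  shows "(\<Sum>s\<in>{0::nat,1}. \<Sum>t\<in>{0::nat,1}. g a s * g b t * levi_civita s t) = levi_civita a b"
proof -
  have det: "g 0 0 * g 1 1 - g 0 1 * g 1 0 = 1" using g by (simp add: SU2_def)
  have "(\<Sum>s\<in>{0::nat,1}. \<Sum>t\<in>{0::nat,1}. g a s * g b t * levi_civita s t)
      = g a 0 * g b 1 - g a 1 * g b 0"
    by (simp add: levi_civita_def)
  also have "\<dots> = levi_civita a b"
    using a b det by (auto simp: levi_civita_def algebra_simps)
  finally show ?thesis .
qed

lemma qact_omega:
  assumes g: "g \<in> SU2"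
  shows "qact (2 * n) g (omega n) = omega n"
proof (rule qspace_eqI[OF qact_qspace omega_qspace])
  fix w assume w: "w \<in> qwords (2 * n)"
  then have "w \<in> qwords (n + n)" by (simp add: mult_2)
  then obtain x y where xy: "x \<in> qwords n" "y \<in> qwords n" "w = x @ y" by (rule qwords_add_split)
  have lx: "length x = n" "length y = n" using xy by (simp_all add: qwords_length)
  have "qact (2 * n) g (omega n) w = qact (n + n) g (omega n) (x @ y)"
    using xy by (simp add: mult_2)
  also have "\<dots>
      = (\<Sum>x'\<in>qwords n. \<Sum>y'\<in>qwords n. word_coeff g x x' * word_coeff g y y' * omega n (x' @ y'))"
    by (rule qact_append[OF xy(1) xy(2)])
  also have "\<dots>
      = (\<Sum>x'\<in>qwords n. \<Sum>y'\<in>qwords n. \<Prod>i<n. g (x ! i) (x' ! i) * g (y ! i) (y' ! i)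
          * levi_civita (x' ! i) (y' ! i))"
    using lx by (intro sum.cong[OF refl]) (simp add: omega_append word_coeff_def prod.distrib)
  also have "\<dots> = (\<Prod>i<n. \<Sum>s\<in>{0::nat,1}. \<Sum>t\<in>{0::nat,1}. g (x ! i) s * g (y ! i) t * levi_civita s t)"
    by (rule sum_sum_prod_nth)
  also have "\<dots> = (\<Prod>i<n. levi_civita (x ! i) (y ! i))"
  proof (rule prod.cong[OF refl])
    fix i assume "i \<in> {..<n}"
    then have "x ! i \<in> set x" "y ! i \<in> set y" using lx by simp_all
    moreover have "set x \<subseteq> {0,1}" "set y \<subseteq> {0,1}" using xy by (simp_all add: qwords_def)
    ultimately have "x ! i \<in> {0,1}" "y ! i \<in> {0,1}" by blast+
    then show "(\<Sum>s\<in>{0::nat,1}. \<Sum>t\<in>{0::nat,1}. g (x ! i) s * g (y ! i) t * levi_civita s t)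
        = levi_civita (x ! i) (y ! i)"
      by (rule levi_civita_det[OF g])
  qed
  also have "\<dots> = omega n w" using xy by (simp add: omega_append)
  finally show "qact (2 * n) g (omega n) w = omega n w" .
qed

definition sym_first :: "nat \<Rightarrow> tvec \<Rightarrow> tvec" where
  "sym_first n f w = (if w \<in> qwords (2 * n) then qp n (\<lambda>x'. f (x' @ drop n w)) (take n w) else 0)"

lemma sym_first_qspace: "sym_first n f \<in> qspace (2 * n)"
  by (simp add: sym_first_def qspace_def)

lemma sym_first_append: "x \<in> qwords n \<Longrightarrow> y \<in> qwords n
    \<Longrightarrow> sym_first n f (x @ y) = qp n (\<lambda>x'. f (x' @ y)) x"
proof -
  assume x: "x \<in> qwords n" and y: "y \<in> qwords n"
  have "x @ y \<in> qwords (2 * n)" using qwords_appendI[OF x y] by (simp add: mult_2)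
  moreover have "length x = n" using x by (simp add: qwords_length)
  ultimately show ?thesis by (simp add: sym_first_def)
qed

lemma qp_cong: "(\<And>x. x \<in> qwords n \<Longrightarrow> f x = f' x) \<Longrightarrow> w \<in> qwords n \<Longrightarrow> qp n f w = qp n f' w"
  unfolding qp_def by (auto intro!: sum.cong qperm_qwords)

lemma qp_scale: "qp n (\<lambda>x. c * f x) w = c * qp n f w"
  by (simp add: qp_def sum_distrib_left)

definition flip_word :: "nat list \<Rightarrow> nat list" where
  "flip_word y = map (\<lambda>a. 1 - a) y"

lemma flip_word_Cons: "flip_word (b # y) = (1 - b) # flip_word y" by (simp add: flip_word_def)

lemma prod_levi_civita:
  "length x = length y \<Longrightarrow> set x \<subseteq> {0,1} \<Longrightarrow> set y \<subseteq> {0,1}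
      \<Longrightarrow> (\<Prod>i<length x. levi_civita (x ! i) (y ! i))
          = (if x = flip_word y then (-1) ^ (zeros y) else 0)"
proof (induction x y rule: list_induct2)
  case Nil then show ?case by (simp add: flip_word_def)
next
  case (Cons a x b y)
  have ab: "a \<in> {0,1}" "b \<in> {0,1}" using Cons.prems by auto
  have IH: "(\<Prod>i<length x. levi_civita (x ! i) (y ! i))
      = (if x = flip_word y then (-1) ^ (zeros y) else 0)"
    using Cons.IH Cons.prems by simp
  have "(\<Prod>i<length (a # x). levi_civita ((a # x) ! i) ((b # y) ! i))
      = levi_civita a b * (\<Prod>i<length x. levi_civita (x ! i) (y ! i))"
    by (simp only: length_Cons prod.lessThan_Suc_shift) simp
  also have "\<dots> = (if a # x = flip_word (b # y) then (-1) ^ (zeros (b # y)) else 0)"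
    unfolding IH flip_word_Cons using ab by (auto simp: levi_civita_def zeros_Cons)
  finally show ?case .
qed

lemma zeros_flip_word: "set y \<subseteq> {0,1} \<Longrightarrow> zeros (flip_word y) = length y - zeros y"
proof (induction y)
  case Nil then show ?case by (simp add: flip_word_def)
next
  case (Cons b y)
  then have "b = 0 \<or> b = 1" by auto
  with Cons show ?case using zeros_le_length[of y]
    by (auto simp: flip_word_Cons zeros_Cons Suc_diff_le)
qed

lemma flip_word_qwords: "y \<in> qwords n \<Longrightarrow> flip_word y \<in> qwords n"
  by (auto simp: qwords_def flip_word_def)

lemma minus_one_power_complement:
  assumes "a + b = (n::nat)"
  shows "(-1::real) ^ b = (-1) ^ n * (-1) ^ a"
proof -
  have "(-1::real) ^ n * (-1) ^ a = (-1) ^ (a + b) * (-1) ^ a" using assms by simp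
  also have "\<dots> = ((-1) ^ a * (-1) ^ a) * (-1) ^ b" by (simp add: power_add ac_simps)
  also have "(-1::real) ^ a * (-1) ^ a = 1" by (simp flip: power_add)
  finally show ?thesis by simp
qed

lemma omega_append_flip_word:
  assumes x: "x \<in> qwords n" and y: "y \<in> qwords n"
  shows "omega n (x @ y) = (-1) ^ zeros y * qbasis (flip_word y) x"
proof -
  have "omega n (x @ y) = (\<Prod>i<length x. levi_civita (x ! i) (y ! i))"
    using omega_append[OF x y] x by (simp add: qwords_length)
  also have "\<dots> = (if x = flip_word y then (-1) ^ zeros y else 0)"
    using prod_levi_civita[of x y] x y by (simp add: qwords_def)
  finally show ?thesis by (simp add: qbasis_def)
qed

lemma sym_first_omega:
  "sym_first n (omega n) = (\<lambda>w. complex_of_real ((-1)^n * sqrt (real (n + 1))) * qdelta n w)"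
proof (rule qspace_eqI[OF sym_first_qspace])
  show "(\<lambda>w. complex_of_real ((-1)^n * sqrt (real (n + 1))) * qdelta n w) \<in> qspace (2 * n)"
    by (rule lin_closed_scale[OF lin_closed_qspace qdelta_qspace])
  fix w assume "w \<in> qwords (2 * n)"
  then obtain x y where xy: "x \<in> qwords n" "y \<in> qwords n" "w = x @ y"
    by (metis mult_2 qwords_add_split)
  have k: "zeros y \<le> n" "zeros (flip_word y) = n - zeros y"
    using xy(2) zeros_flip_word[of y] by (simp_all add: zeros_qwords_le qwords_def)
  have "sym_first n (omega n) w = (-1) ^ zeros y * qp n (qbasis (flip_word y)) x"
    using xy by (simp add: sym_first_append qp_cong[OF omega_append_flip_word] qp_scale)
  also have "\<dots>
      = (-1) ^ zeros y * (if zeros x + zeros y = n then 1 / of_nat (n choose zeros x) else 0)"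
    using qp_qbasis[OF flip_word_qwords[OF xy(2)] xy(1)] k by auto
  also have "\<dots> = complex_of_real ((-1)^n * sqrt (real (n + 1))) * qdelta n w"
  proof (cases "zeros x + zeros y = n")
    case True
    have "(-1::real) ^ zeros y / real (n choose zeros x)
        = (-1)^n * sqrt (real (n + 1)) * delta_coeff n (zeros x)"
      using minus_one_power_complement[OF True] by (simp add: delta_coeff_def field_simps)
    then have "complex_of_real ((-1) ^ zeros y / real (n choose zeros x))
        = complex_of_real ((-1)^n * sqrt (real (n + 1)) * delta_coeff n (zeros x))"
      by (rule arg_cong)
    then show ?thesis using True xy by (simp add: qdelta_append qwords_length of_real_divide)
  qed (use xy in \<open>simp add: qdelta_append qwords_length\<close>)
  finally show "sym_first n (omega n) w
      = complex_of_real ((-1)^n * sqrt (real (n + 1))) * qdelta n w" .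
qed

lemma word_coeff_qperm:
  assumes s: "\<sigma> permutes {..<n}" and x: "x \<in> qwords n" and a: "a \<in> qwords n"
  shows "word_coeff g (qperm_word \<sigma> x) (qperm_word \<sigma> a) = word_coeff g x a"
proof -
  have lx: "length x = n" "length a = n" using x a by (simp_all add: qwords_length)
  have "word_coeff g (qperm_word \<sigma> x) (qperm_word \<sigma> a) = (\<Prod>i<n. g (x ! \<sigma> i) (a ! \<sigma> i))"
  proof -
    have s1: "\<sigma> permutes {..<length x}" and s2: "\<sigma> permutes {..<length a}" using s lx by simp_all
    show ?thesis unfolding word_coeff_def qperm_word_eq using lx
      by (intro prod.cong) (simp_all add: permute_list_nth[OF s1] permute_list_nth[OF s2])
  qed
  also have "\<dots> = (\<Prod>i<n. g (x ! i) (a ! i))"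
    using prod.permute[OF s, of "\<lambda>i. g (x ! i) (a ! i)"] by (simp add: comp_def)
  also have "\<dots> = word_coeff g x a" using lx by (simp add: word_coeff_def)
  finally show ?thesis .
qed

lemma sum_word_coeff_qperm:
  assumes \<sigma>: "\<sigma> permutes {..<n}" and x: "x \<in> qwords n"
  shows "(\<Sum>a\<in>qwords n. word_coeff g x a * F (qperm_word \<sigma> a))
      = (\<Sum>a\<in>qwords n. word_coeff g (qperm_word \<sigma> x) a * F a)"
proof -
  have "(\<Sum>a\<in>qwords n. word_coeff g x a * F (qperm_word \<sigma> a))
      = (\<Sum>a\<in>qwords n. word_coeff g (qperm_word \<sigma> x) (qperm_word \<sigma> a) * F (qperm_word \<sigma> a))"
    by (intro sum.cong refl) (simp add: word_coeff_qperm[OF \<sigma> x])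
  also have "\<dots> = (\<Sum>a\<in>qwords n. word_coeff g (qperm_word \<sigma> x) a * F a)"
    by (rule sum_qperm[OF \<sigma>])
  finally show ?thesis .
qed

lemma qact_sym_first: "qact (2 * n) g (sym_first n f) = sym_first n (qact (2 * n) g f)"
proof (rule qspace_eqI[OF qact_qspace sym_first_qspace])
  fix w assume w: "w \<in> qwords (2 * n)"
  then have "w \<in> qwords (n + n)" by (simp add: mult_2)
  then obtain x y where xy: "x \<in> qwords n" "y \<in> qwords n" "w = x @ y" by (rule qwords_add_split)
  define F where "F a = (\<Sum>b\<in>qwords n. word_coeff g y b * f (a @ b))" for a
  define P where "P = {\<sigma>. \<sigma> permutes {..<n}}"
  have "qact (2 * n) g (sym_first n f) w = qact (n + n) g (sym_first n f) (x @ y)"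
    using xy by (simp add: mult_2)
  also have "\<dots>
      = (\<Sum>a\<in>qwords n. \<Sum>b\<in>qwords n. word_coeff g x a * word_coeff g y b * sym_first n f (a @ b))"
    by (rule qact_append[OF xy(1) xy(2)])
  also have "\<dots>
      = (\<Sum>a\<in>qwords n. \<Sum>b\<in>qwords n. word_coeff g x a * word_coeff g y b
          * ((\<Sum>\<sigma>\<in>P. f (qperm_word \<sigma> a @ b)) / of_nat (fact n)))"
    using xy(2) by (intro sum.cong[OF refl]) (simp add: sym_first_append qp_def P_def)
  also have "\<dots> = (\<Sum>\<sigma>\<in>P. \<Sum>a\<in>qwords n. word_coeff g x a * F (qperm_word \<sigma> a)) / of_nat (fact n)"
    unfolding F_def by (simp add: sum_divide_distrib sum_distrib_left sum_distrib_right ac_simps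
      sum.swap[of _ P])
  also have "\<dots> = (\<Sum>\<sigma>\<in>P. \<Sum>a\<in>qwords n. word_coeff g (qperm_word \<sigma> x) a * F a) / of_nat (fact n)"
    by (simp add: sum_word_coeff_qperm xy(1) P_def)
  also have "\<dots> = (\<Sum>\<sigma>\<in>P. qact (n + n) g f (qperm_word \<sigma> x @ y)) / of_nat (fact n)"
  proof -
    have "(\<Sum>a\<in>qwords n. word_coeff g (qperm_word \<sigma> x) a * F a)
        = qact (n + n) g f (qperm_word \<sigma> x @ y)"
      if s: "\<sigma> \<in> P" for \<sigma>
    proof -
      have sx: "qperm_word \<sigma> x \<in> qwords n" using qperm_qwords[of \<sigma> n x] s xy(1) by (simp add: P_def)
      show ?thesis unfolding qact_append[OF sx xy(2)] F_def by (simp add: sum_distrib_left ac_simps)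
    qed
    then show ?thesis by simp
  qed
  also have "\<dots> = sym_first n (qact (2 * n) g f) w"
    using xy by (simp add: sym_first_append qp_def P_def mult_2)
  finally show "qact (2 * n) g (sym_first n f) w = sym_first n (qact (2 * n) g f) w" .
qed

lemma qact_qdelta:
  assumes g: "g \<in> SU2"
  shows "qact (2 * n) g (qdelta n) = qdelta n"
proof -
  define c where "c = complex_of_real ((-1)^n * sqrt (real (n + 1)))"
  have c: "c \<noteq> 0" by (simp add: c_def)
  have "(\<lambda>w. c * qdelta n w) = sym_first n (omega n)" by (simp add: sym_first_omega c_def)
  also have "\<dots> = sym_first n (qact (2 * n) g (omega n))" by (simp add: qact_omega[OF g])
  also have "\<dots> = qact (2 * n) g (sym_first n (omega n))" by (simp add: qact_sym_first)
  also have "\<dots> = (\<lambda>w. c * qact (2 * n) g (qdelta n) w)"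
    by (simp add: sym_first_omega c_def qact_scale)
  finally have E: "(\<lambda>w. c * qdelta n w) = (\<lambda>w. c * qact (2 * n) g (qdelta n) w)" .
  show ?thesis
  proof (rule ext)
    fix w
    from fun_cong[OF E, of w] have "c * qdelta n w = c * qact (2 * n) g (qdelta n) w" by simp
    then show "qact (2 * n) g (qdelta n) w = qdelta n w" using c by simp
  qed
qed

lemma qact_append3:
  assumes x: "x \<in> qwords a" and y: "y \<in> qwords b" and z: "z \<in> qwords c"
  shows "qact (a + b + c) g v (x @ y @ z)
      = (\<Sum>x'\<in>qwords a. \<Sum>y'\<in>qwords b. \<Sum>z'\<in>qwords c. word_coeff g y y'
          * (word_coeff g x x' * word_coeff g z z' * v (x' @ y' @ z')))"
proof -
  have "x @ y @ z \<in> qwords (a + b + c)" using x y z by (rule qwords_append3I)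
  then have "qact (a + b + c) g v (x @ y @ z)
      = (\<Sum>x'\<in>qwords a. \<Sum>y'\<in>qwords b. \<Sum>z'\<in>qwords c. word_coeff g (x @ y @ z) (x' @ y' @ z')
          * v (x' @ y' @ z'))"
    by (simp only: qact_qwords sum_qwords_add3)
  also have "\<dots>
      = (\<Sum>x'\<in>qwords a. \<Sum>y'\<in>qwords b. \<Sum>z'\<in>qwords c. word_coeff g y y'
          * (word_coeff g x x' * word_coeff g z z' * v (x' @ y' @ z')))"
    using x y by (intro sum.cong refl) (simp add: word_coeff_append qwords_length)
  finally show ?thesis .
qed

lemma qact_ins_delta:
  assumes g: "g \<in> SU2"
  shows "qact (n * (j + 2 + r)) g (ins_delta n j v) = ins_delta n j (qact (n * (j + r)) g v)"
proof (rule qspace_eqI[OF qact_qspace])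
  show "ins_delta n j (qact (n * (j + r)) g v) \<in> qspace (n * (j + 2 + r))"
    using ins_delta_qspace[OF qact_qspace, of n j r g v] by (simp add: add_ac)
  have e: "n * (j + 2 + r) = n * j + 2 * n + n * r" by (simp add: algebra_simps)
  fix w assume "w \<in> qwords (n * (j + 2 + r))"
  then obtain x z y where w: "x \<in> qwords (n * j)" "z \<in> qwords (2 * n)" "y \<in> qwords (n * r)"
    "w = x @ z @ y"
    unfolding e by (rule qwords_add3_split)
  have "qact (n * (j + 2 + r)) g (ins_delta n j v) w
      = (\<Sum>x'\<in>qwords (n * j). \<Sum>z'\<in>qwords (2 * n). \<Sum>y'\<in>qwords (n * r).
          (word_coeff g z z' * qdelta n z')
              * (word_coeff g x x' * word_coeff g y y' * v (x' @ y')))"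
    unfolding e w(4) qact_append3[OF w(1-3)]
    by (intro sum.cong refl) (simp add: ins_delta_append qwords_length)
  also have "\<dots>
      = (\<Sum>z'\<in>qwords (2 * n). word_coeff g z z' * qdelta n z')
          * (\<Sum>x'\<in>qwords (n * j). \<Sum>y'\<in>qwords (n * r). word_coeff g x x' * word_coeff g y y'
              * v (x' @ y'))"
    by (simp add: sum_distrib_left sum_distrib_right sum.swap[of _ "qwords (2 * n)"])
  also have "\<dots> = qdelta n z * qact (n * j + n * r) g v (x @ y)"
    using qact_qwords[OF w(2), of g "qdelta n"] qact_qdelta[OF g] qact_append[OF w(1) w(3)] by simp
  also have "\<dots> = ins_delta n j (qact (n * (j + r)) g v) w"
    using w ins_delta_append[of x n j z] by (simp add: qwords_length distrib_left)
  finally show "qact (n * (j + 2 + r)) g (ins_delta n j v) w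
      = ins_delta n j (qact (n * (j + r)) g v) w" .
qed

lemma qG_qact:
  assumes g: "g \<in> SU2" and eS: "\<eta> \<in> qspace (n * k)"
  shows "qG n (Suc k) (qact (n * k) g \<eta>) = qact (n * (Suc k + 1)) g (qG n (Suc k) \<eta>)"
proof -
  have aS: "qact (n * k) g \<eta> \<in> qspace (n * k)" by (rule qact_qspace)
  have "qact (n * (Suc k + 1)) g (ins_delta n j \<eta>) = ins_delta n j (qact (n * k) g \<eta>)"
    if j: "j < Suc k" for j
  proof -
    define r where "r = k - j"
    have k: "k = j + r" using j by (simp add: r_def)
    have "qact (n * (j + 2 + r)) g (ins_delta n j \<eta>) = ins_delta n j (qact (n * (j + r)) g \<eta>)"
      by (rule qact_ins_delta[OF g])
    then show ?thesis using k by (simp add: algebra_simps)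
  qed
  then show ?thesis
    unfolding qG_closed_form[OF eS] qG_closed_form[OF aS] qact_sum qact_scale by simp
qed

lemma qPhi_qact:
  assumes g: "g \<in> SU2" and eS: "\<eta> \<in> qspace (n * k)"
  shows "qPhi n (Suc k) (qact (n * (Suc k + 1)) g \<xi>, qact (n * k) g \<eta>)
      = qact (n * (Suc k + 1)) g (qPhi n (Suc k) (\<xi>, \<eta>))"
  unfolding qPhi_def fst_conv snd_conv qact_add qV_eq_V_coeff qact_scale qG_qact[OF g eS] ..

theorem proposition3p10:
  fixes n m :: nat
  assumes "n \<ge> 1" and "m \<ge> 1"
  shows "(\<forall>\<xi>\<in>qE n (m + 1). \<forall>\<eta>\<in>qE n (m - 1).
            \<forall>\<xi>'\<in>qE n (m + 1). \<forall>\<eta>'\<in>qE n (m - 1).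
              qinner (n * (m + 1)) (qPhi n m (\<xi>, \<eta>)) (qPhi n m (\<xi>', \<eta>'))
              = qinner (n * (m + 1)) \<xi> \<xi>' + qinner (n * (m - 1)) \<eta> \<eta>')
       \<and> bij_betw (qPhi n m) (qE n (m + 1) \<times> qE n (m - 1)) (qtens (n * m) (qE n m) (qE n 1))
       \<and> (\<forall>g\<in>SU2. \<forall>\<xi>\<in>qE n (m + 1). \<forall>\<eta>\<in>qE n (m - 1).
              qPhi n m (qact (n * (m + 1)) g \<xi>, qact (n * (m - 1)) g \<eta>)
              = qact (n * (m + 1)) g (qPhi n m (\<xi>, \<eta>)))"
proof -
  obtain k where m: "m = Suc k" using assms(2) by (cases m) auto
  have E: "qE n (Suc k + 1) = traceless n (Suc (Suc k))" "qE n k = traceless n k"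
    by (simp_all add: qE_eq_traceless)
  have T: "qtens (n * Suc k) (qE n (Suc k)) (qE n 1) = traceless_head n (Suc k)"
    using qtens_qE_qL_eq[of n "Suc k"] by (simp add: qE_def)
  show ?thesis
    unfolding m E T diff_Suc_1
    using qinner_qPhi_qPhi[OF assms(1)] bij_betw_qPhi[OF assms(1)] qPhi_qact traceless_qspace
    by blast
qed

end
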